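(* For every $\varepsilon>0$ small enough, with $c=\sqrt{1-\varepsilon^2}$, let $\rho$ be the solution of $$-c^2\frac{\rho-1}{\rho}+\frac{c^2(\rho-1)^2}{2\rho^2}+g(\rho)=K(\rho)\rho''+\tfrac12K'(\rho)\rho'^2$$ with $\rho(0)=\rho_{m,\varepsilon}$, $\rho'(0)=0$, and set $u=\frac{c(\rho-1)}{\rho}$. Then $(\rho,u)$ is a global solution on $\mathbb R$ of $$-c\rho'+(\rho u)'=0,\qquad -cu'+\Big(\frac{u^2}{2}\Big)'+g(\rho)'=\Big(K(\rho)\rho''+\tfrac12K'(\rho)\rho'^2\Big)',$$ with $\rho\to1$, $\rho'\to0$, $\rho''\to0$, $u\to0$, $u'\to0$, $u''\to0$ at $\pm\infty$. Moreover $\rho$ is even; if $\gamma>0$ it is increasing on $[0,\infty)$, and if $\gamma<0$ it is decreasing on $[0,\infty)$.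
   Context: Setting (1D). $K,g:(0,\infty)\to\mathbb R$ are smooth, $K>0$, $g(1)=0$, $g'(1)=1$, $\Gamma:=g''(1)+3\neq0$, $\gamma=1/\Gamma$, and $G$ is the primitive of $g$ with $G(1)=0$. For $\varepsilon\in(0,1)$ let $c=\sqrt{1-\varepsilon^2}$ and $F_\varepsilon(\rho)=-\frac{c^2}{2\rho}(\rho-1)^2+G(\rho)$ for $\rho>0$. Define $\rho_{m,\varepsilon}=\sup\{\rho<1:F_\varepsilon(\rho)=0\}$ if $\gamma>0$ and $\rho_{m,\varepsilon}=\inf\{\rho>1:F_\varepsilon(\rho)=0\}$ if $\gamma<0$. *)

theory Defs
  imports "HOL-Analysis.Analysis"
begin

definition smooth_on :: "real set \<Rightarrow> (real \<Rightarrow> real) \<Rightarrow> bool" where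
  "smooth_on S f \<longleftrightarrow> (\<forall>n. \<forall>x\<in>S. ((deriv ^^ n) f) differentiable (at x))"

definition Feps :: "(real \<Rightarrow> real) \<Rightarrow> real \<Rightarrow> real \<Rightarrow> real" where
  "Feps G eps r = - ((sqrt (1 - eps^2))^2 / (2 * r)) * (r - 1)^2 + G r"

definition rho_m :: "(real \<Rightarrow> real) \<Rightarrow> real \<Rightarrow> real \<Rightarrow> real" where
  "rho_m G gam eps =
     (if gam > 0 then Sup {r. 0 < r \<and> r < 1 \<and> Feps G eps r = 0}
      else Inf {r. 1 < r \<and> Feps G eps r = 0})"

definition ode_sol :: "(real \<Rightarrow> real) \<Rightarrow> (real \<Rightarrow> real) \<Rightarrow> real \<Rightarrow> real set \<Rightarrow> (real \<Rightarrow> real) \<Rightarrow> bool" where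
  "ode_sol K g cs I \<sigma> \<longleftrightarrow>
     (\<forall>t\<in>I. \<sigma> t > 0 \<and> \<sigma> differentiable (at t) \<and> deriv \<sigma> differentiable (at t) \<and>
        - (cs^2) * (\<sigma> t - 1) / \<sigma> t + cs^2 * (\<sigma> t - 1)^2 / (2 * (\<sigma> t)^2) + g (\<sigma> t)
        = K (\<sigma> t) * deriv (deriv \<sigma>) t + 1/2 * deriv K (\<sigma> t) * (deriv \<sigma> t)^2)"

end

theory Submission
  imports Defs
begin

text \<open>
  The profile equation \<open>K(\<rho>) \<rho>'' + K'(\<rho>) \<rho>'\<^sup>2 / 2 = F'(\<rho>)\<close>, with \<open>F = F\<^sub>\<epsilon>\<close>, has the first
  integral \<open>K(\<rho>) \<rho>'\<^sup>2 = 2 F(\<rho>)\<close>. Since \<open>F(1) = F'(1) = 0\<close>, \<open>F''(1) = \<epsilon>\<^sup>2\<close> and \<open>F'''(1) \<approx> \<Gamma>\<close>,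
  for small \<open>\<epsilon>\<close> the potential has a first simple zero \<open>\<rho>\<^sub>m\<close> close to \<open>1\<close>, on the side of \<open>1\<close>
  fixed by the sign of \<open>\<Gamma>\<close>, and is positive in between. The solution starting at rest at
  \<open>\<rho>\<^sub>m\<close> is therefore the homoclinic orbit \<open>\<rho>' = \<plusminus>\<surd>(2F(\<rho>)/K(\<rho>))\<close>: it is built by inverting
  the time map \<open>\<integral> d\<rho> / \<surd>(2F/K)\<close>, which diverges at the double zero \<open>1\<close>, so the orbit is
  global, even, monotone on \<open>[0, \<infinity>)\<close> and tends to \<open>1\<close>. Gronwall's inequality gives
  uniqueness. With \<open>u = c(\<rho> - 1)/\<rho>\<close> the mass equation holds identically, \<open>\<rho> u = c (\<rho> - 1)\<close>,
  and the momentum equation is the derivative of the profile equation.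
\<close>

section \<open>Zeros and signs from higher derivatives\<close>

lemma neg_of_DERIV_neg_from_zero:
  fixes h h' :: "real \<Rightarrow> real"
  assumes "h 0 = 0" and "\<And>y. 0 \<le> y \<Longrightarrow> y \<le> d \<Longrightarrow> DERIV h y :> h' y"
    and "\<And>y. 0 < y \<Longrightarrow> y \<le> d \<Longrightarrow> h' y < 0" and "0 < y" "y \<le> d"
  shows "h y < 0"
proof -
  have "h y < h 0"
  proof (rule DERIV_neg_imp_decreasing_open[of 0 y])
    show "continuous_on {0..y} h"
      using assms(2,4,5) by (intro continuous_at_imp_continuous_on ballI)
        (meson DERIV_isCont atLeastAtMost_iff order.trans)
    show "\<exists>l. DERIV h x :> l \<and> l < 0" if "0 < x" "x < y" for x
      using assms that by (intro exI[of _ "h' x"]) auto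
  qed (use assms in auto)
  with assms show ?thesis by simp
qed

lemma pos_of_DERIV_pos_from_zero:
  fixes h h' :: "real \<Rightarrow> real"
  assumes "h 0 = 0" and "\<And>y. 0 \<le> y \<Longrightarrow> y \<le> d \<Longrightarrow> DERIV h y :> h' y"
    and "\<And>y. 0 < y \<Longrightarrow> y \<le> d \<Longrightarrow> h' y > 0" and "0 < y" "y \<le> d"
  shows "h y > 0"
  using neg_of_DERIV_neg_from_zero[of "\<lambda>y. - h y" d "\<lambda>y. - h' y" y] assms
  by (auto intro: derivative_intros)

lemma pos_near_zero_of_second_DERIV_pos:
  fixes f f' f'' :: "real \<Rightarrow> real"
  assumes d: "d > 0"
    and D1: "\<And>y. 0 \<le> y \<Longrightarrow> y \<le> d \<Longrightarrow> DERIV f y :> f' y"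
    and D2: "\<And>y. 0 \<le> y \<Longrightarrow> y \<le> d \<Longrightarrow> DERIV f' y :> f'' y"
    and cont: "isCont f'' 0"
    and f0: "f 0 = 0" and f'0: "f' 0 = 0" and f''0: "f'' 0 > 0"
  obtains \<eta> where "0 < \<eta>" "\<eta> < d" "f \<eta> > 0"
proof -
  obtain e where e: "e > 0" "\<And>y. y \<noteq> 0 \<Longrightarrow> \<bar>y\<bar> < e \<Longrightarrow> \<bar>f'' y - f'' 0\<bar> < f'' 0"
    using cont f''0 LIM_D[of f'' "f'' 0" 0 "f'' 0"] unfolding isCont_def by auto
  define \<eta> where "\<eta> = min e d / 2"
  have \<eta>: "0 < \<eta>" "\<eta> < d" "\<eta> < e" using e d by (auto simp: \<eta>_def)
  have f''_pos: "f'' y > 0" if "0 < y" "y \<le> \<eta>" for y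
    using e(2)[of y] that \<eta> by auto
  have f'_pos: "f' y > 0" if "0 < y" "y \<le> \<eta>" for y
    by (rule pos_of_DERIV_pos_from_zero[of f' \<eta> f'']) (use that f''_pos f'0 D2 \<eta> in auto)
  have "f \<eta> > 0"
    by (rule pos_of_DERIV_pos_from_zero[of f \<eta> f']) (use f'_pos f0 D1 \<eta> in auto)
  with \<eta> that show ?thesis by blast
qed

text \<open>With \<open>f(0) = f'(0) = 0\<close> and \<open>f''' < 0\<close>, the function \<open>y f'(y) - 2 f(y)\<close> is negative,
  so \<open>f(y) / y\<^sup>2\<close> is strictly decreasing: it can vanish at most once.\<close>
lemma DERIV_third_neg_imp_div_square_decreasing:
  fixes f f' f'' f''' :: "real \<Rightarrow> real"
  assumes D1: "\<And>y. 0 \<le> y \<Longrightarrow> y \<le> d \<Longrightarrow> DERIV f y :> f' y"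
    and D2: "\<And>y. 0 \<le> y \<Longrightarrow> y \<le> d \<Longrightarrow> DERIV f' y :> f'' y"
    and D3: "\<And>y. 0 \<le> y \<Longrightarrow> y \<le> d \<Longrightarrow> DERIV f'' y :> f''' y"
    and f0: "f 0 = 0" and f'0: "f' 0 = 0"
    and f'''_neg: "\<And>y. 0 < y \<Longrightarrow> y \<le> d \<Longrightarrow> f''' y < 0"
  shows "\<And>y. 0 < y \<Longrightarrow> y \<le> d \<Longrightarrow> y * f' y - 2 * f y < 0"
    and "\<And>y z. 0 < y \<Longrightarrow> y < z \<Longrightarrow> z \<le> d \<Longrightarrow> f z / z^2 < f y / y^2"
proof -
  define \<Phi> where "\<Phi> y = y * f'' y - f' y" for y
  define \<Psi> where "\<Psi> y = y * f' y - 2 * f y" for y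
  have \<Phi>_neg: "\<Phi> y < 0" if "0 < y" "y \<le> d" for y
  proof (rule neg_of_DERIV_neg_from_zero[of \<Phi> d "\<lambda>y. y * f''' y"])
    show "DERIV \<Phi> y :> y * f''' y" if "0 \<le> y" "y \<le> d" for y
      unfolding \<Phi>_def using D2[OF that] D3[OF that] by (auto intro!: derivative_eq_intros)
  qed (use that f'''_neg f'0 in \<open>auto simp: \<Phi>_def mult_pos_neg\<close>)
  have \<Psi>_neg: "\<Psi> y < 0" if "0 < y" "y \<le> d" for y
  proof (rule neg_of_DERIV_neg_from_zero[of \<Psi> d \<Phi>])
    show "DERIV \<Psi> y :> \<Phi> y" if "0 \<le> y" "y \<le> d" for y
      unfolding \<Psi>_def \<Phi>_def using D1[OF that] D2[OF that] by (auto intro!: derivative_eq_intros)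
  qed (use that \<Phi>_neg f0 in \<open>auto simp: \<Psi>_def\<close>)
  then show "y * f' y - 2 * f y < 0" if "0 < y" "y \<le> d" for y
    using that by (simp add: \<Psi>_def)
  show "f z / z^2 < f y / y^2" if "0 < y" "y < z" "z \<le> d" for y z
  proof (rule DERIV_neg_imp_decreasing[of y z])
    fix x assume x: "y \<le> x" "x \<le> z"
    have "DERIV (\<lambda>y. f y / y^2) x :> (x * f' x - 2 * f x) / x^3"
      using D1[of x] x that
      by (auto intro!: derivative_eq_intros simp: field_simps power2_eq_square power3_eq_cube)
    moreover have "(x * f' x - 2 * f x) / x^3 < 0"
      using \<Psi>_neg[of x] x that by (auto simp: \<Psi>_def divide_neg_pos)
    ultimately show "\<exists>l. DERIV (\<lambda>y. f y / y^2) x :> l \<and> l < 0" by blast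
  qed (use that in auto)
qed

lemma first_zero_of_DERIV_third_neg:
  fixes f f' f'' f''' :: "real \<Rightarrow> real"
  assumes d: "d > 0"
    and D1: "\<And>y. 0 \<le> y \<Longrightarrow> y \<le> d \<Longrightarrow> DERIV f y :> f' y"
    and D2: "\<And>y. 0 \<le> y \<Longrightarrow> y \<le> d \<Longrightarrow> DERIV f' y :> f'' y"
    and D3: "\<And>y. 0 \<le> y \<Longrightarrow> y \<le> d \<Longrightarrow> DERIV f'' y :> f''' y"
    and f0: "f 0 = 0" and f'0: "f' 0 = 0" and f''0: "f'' 0 > 0"
    and f'''_neg: "\<And>y. 0 < y \<Longrightarrow> y \<le> d \<Longrightarrow> f''' y < 0"
    and fd: "f d < 0"
  obtains y0 where "0 < y0" "y0 < d" "f y0 = 0" "f' y0 < 0" "\<And>y. 0 < y \<Longrightarrow> y < y0 \<Longrightarrow> f y > 0"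
proof -
  note mono = DERIV_third_neg_imp_div_square_decreasing[OF D1 D2 D3 f0 f'0 f'''_neg]
  obtain \<eta> where \<eta>: "0 < \<eta>" "\<eta> < d" "f \<eta> > 0"
    using pos_near_zero_of_second_DERIV_pos[OF d D1 D2 _ f0 f'0 f''0] D3[of 0] d
    by (metis DERIV_isCont order_refl less_imp_le)
  have "continuous_on {\<eta>..d} f"
    using D1 \<eta> by (intro continuous_at_imp_continuous_on ballI)
      (meson DERIV_isCont atLeastAtMost_iff less_imp_le order_trans)
  then obtain y0 where y0: "\<eta> \<le> y0" "y0 \<le> d" "f y0 = 0"
    using IVT2'[of f d 0 \<eta>] \<eta> fd by auto
  have "y0 < d" using y0 fd by (auto simp: le_less)
  moreover have "y0 * f' y0 - 2 * f y0 < 0"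
    by (rule mono(1)) (use y0 \<eta> in auto)
  then have "f' y0 < 0"
    using y0 \<eta> by (simp add: mult_less_0_iff)
  moreover have "f y > 0" if "0 < y" "y < y0" for y
    using mono(2)[where y=y and z=y0] that y0 \<open>y0 < d\<close> by (auto simp: zero_less_divide_iff)
  ultimately show ?thesis using that[of y0] y0 \<eta> by auto
qed

section \<open>Uniqueness for second order equations\<close>

lemma gronwall_zero:
  fixes E E' :: "real \<Rightarrow> real"
  assumes dE: "\<And>s. s \<in> {min 0 t..max 0 t} \<Longrightarrow> DERIV E s :> E' s"
    and bound: "\<And>s. s \<in> {min 0 t..max 0 t} \<Longrightarrow> \<bar>E' s\<bar> \<le> k * E s"
    and E0: "E 0 = 0" and Et: "E t \<ge> 0"
  shows "E t = 0"
proof (cases "0 \<le> t")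
  case True
  define H where "H s = E s * exp (- k * s)" for s
  have "H t \<le> H 0"
  proof (rule DERIV_nonpos_imp_nonincreasing[OF True])
    fix s assume s: "0 \<le> s" "s \<le> t"
    then have "DERIV H s :> (E' s - k * E s) * exp (- k * s)"
      unfolding H_def using dE[of s] True
      by (auto intro!: derivative_eq_intros simp: algebra_simps)
    moreover have "(E' s - k * E s) * exp (- k * s) \<le> 0"
      using bound[of s] s True by (intro mult_nonpos_nonneg) auto
    ultimately show "\<exists>y. DERIV H s :> y \<and> y \<le> 0" by blast
  qed
  then show ?thesis using E0 Et by (simp add: H_def mult_le_0_iff)
next
  case False
  define H where "H s = E s * exp (k * s)" for s
  have "H t \<le> H 0"
  proof (rule DERIV_nonneg_imp_nondecreasing[of t 0])
    show "t \<le> 0" using False by simp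
    fix s assume s: "t \<le> s" "s \<le> 0"
    then have "DERIV H s :> (E' s + k * E s) * exp (k * s)"
      unfolding H_def using dE[of s] False
      by (auto intro!: derivative_eq_intros simp: algebra_simps)
    moreover have "(E' s + k * E s) * exp (k * s) \<ge> 0"
      using bound[of s] s False by (intro mult_nonneg_nonneg) auto
    ultimately show "\<exists>y. DERIV H s :> y \<and> y \<ge> 0" by blast
  qed
  then show ?thesis using E0 Et by (simp add: H_def mult_le_0_iff)
qed

definition local_lipschitz_halfplane :: "(real \<Rightarrow> real \<Rightarrow> real) \<Rightarrow> bool" where
  "local_lipschitz_halfplane A \<longleftrightarrow>
     (\<forall>m M P. 0 < m \<longrightarrow> (\<exists>L. \<forall>r1 r2 p1 p2. r1 \<in> {m..M} \<and> r2 \<in> {m..M} \<and> \<bar>p1\<bar> \<le> P \<and> \<bar>p2\<bar> \<le> P \<longrightarrow>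
        \<bar>A r1 p1 - A r2 p2\<bar> \<le> L * (\<bar>r1 - r2\<bar> + \<bar>p1 - p2\<bar>)))"

lemma difference_energy_bound:
  fixes a c e L :: real
  assumes "L \<ge> 0" "\<bar>e\<bar> \<le> L * (\<bar>a\<bar> + \<bar>c\<bar>)"
  shows "\<bar>2 * a * c + 2 * c * e\<bar> \<le> (1 + 3 * L) * (a^2 + c^2)"
proof -
  have amgm: "2 * \<bar>a\<bar> * \<bar>c\<bar> \<le> a^2 + c^2"
    using sum_squares_bound[of "\<bar>a\<bar>" "\<bar>c\<bar>"] by (simp add: algebra_simps)
  have "\<bar>2 * c * e\<bar> \<le> 2 * \<bar>c\<bar> * (L * (\<bar>a\<bar> + \<bar>c\<bar>))"
    using assms by (auto simp: abs_mult intro!: mult_left_mono)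
  also have "\<dots> = L * (2 * \<bar>a\<bar> * \<bar>c\<bar> + 2 * c^2)"
    by (simp add: algebra_simps power2_eq_square)
  also have "\<dots> \<le> L * (3 * (a^2 + c^2))"
    using amgm zero_le_power2[of a] assms(1) by (intro mult_left_mono) (smt (verit), simp)
  finally have "\<bar>2 * c * e\<bar> \<le> 3 * L * (a^2 + c^2)" by (simp add: algebra_simps)
  moreover have "\<bar>2 * a * c\<bar> \<le> a^2 + c^2" using amgm by (simp add: abs_mult)
  ultimately show ?thesis by (simp add: algebra_simps)
qed

lemma local_lipschitz_halfplane_on_compact:
  fixes A :: "real \<Rightarrow> real \<Rightarrow> real" and x y x' y' :: "real \<Rightarrow> real"
  assumes lip: "local_lipschitz_halfplane A" and J: "compact J"
    and cont: "continuous_on J x" "continuous_on J y" "continuous_on J x'" "continuous_on J y'"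
    and pos: "\<And>s. s \<in> J \<Longrightarrow> 0 < x s \<and> 0 < y s"
  obtains L where "0 \<le> L"
    "\<And>s. s \<in> J \<Longrightarrow> \<bar>A (x s) (x' s) - A (y s) (y' s)\<bar> \<le> L * (\<bar>x s - y s\<bar> + \<bar>x' s - y' s\<bar>)"
proof (cases "J = {}")
  case False
  have "continuous_on J (\<lambda>s. min (x s) (y s))" using cont by (intro continuous_intros)
  then obtain s0 where s0: "s0 \<in> J" "\<And>s. s \<in> J \<Longrightarrow> min (x s0) (y s0) \<le> min (x s) (y s)"
    using continuous_attains_inf[OF J False] by blast
  define m where "m = min (x s0) (y s0)"
  have m: "0 < m" using pos[OF s0(1)] by (simp add: m_def)
  have "continuous_on J (\<lambda>s. \<bar>x s\<bar> + \<bar>y s\<bar> + \<bar>x' s\<bar> + \<bar>y' s\<bar>)"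
    using cont by (intro continuous_intros)
  then obtain s1 where s1: "s1 \<in> J"
    "\<And>s. s \<in> J \<Longrightarrow> \<bar>x s\<bar> + \<bar>y s\<bar> + \<bar>x' s\<bar> + \<bar>y' s\<bar> \<le> \<bar>x s1\<bar> + \<bar>y s1\<bar> + \<bar>x' s1\<bar> + \<bar>y' s1\<bar>"
    using continuous_attains_sup[OF J False] by blast
  define B where "B = \<bar>x s1\<bar> + \<bar>y s1\<bar> + \<bar>x' s1\<bar> + \<bar>y' s1\<bar>"
  have B: "\<bar>x s\<bar> + \<bar>y s\<bar> + \<bar>x' s\<bar> + \<bar>y' s\<bar> \<le> B" if "s \<in> J" for s
    using s1(2)[OF that] unfolding B_def .
  obtain L where "\<forall>r1 r2 p1 p2. r1 \<in> {m..B} \<and> r2 \<in> {m..B} \<and> \<bar>p1\<bar> \<le> B \<and> \<bar>p2\<bar> \<le> B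
      \<longrightarrow> \<bar>A r1 p1 - A r2 p2\<bar> \<le> L * (\<bar>r1 - r2\<bar> + \<bar>p1 - p2\<bar>)"
    using lip m unfolding local_lipschitz_halfplane_def by meson
  then have L: "\<bar>A r1 p1 - A r2 p2\<bar> \<le> L * (\<bar>r1 - r2\<bar> + \<bar>p1 - p2\<bar>)"
    if "r1 \<in> {m..B}" "r2 \<in> {m..B}" "\<bar>p1\<bar> \<le> B" "\<bar>p2\<bar> \<le> B" for r1 r2 p1 p2
    using that by blast
  have "\<bar>A (x s) (x' s) - A (y s) (y' s)\<bar> \<le> \<bar>L\<bar> * (\<bar>x s - y s\<bar> + \<bar>x' s - y' s\<bar>)"
    if "s \<in> J" for s
  proof -
    have "\<bar>A (x s) (x' s) - A (y s) (y' s)\<bar> \<le> L * (\<bar>x s - y s\<bar> + \<bar>x' s - y' s\<bar>)"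
      by (rule L) (use s0(2)[OF that] B[OF that] pos[OF that] in \<open>auto simp: m_def\<close>)
    also have "\<dots> \<le> \<bar>L\<bar> * (\<bar>x s - y s\<bar> + \<bar>x' s - y' s\<bar>)"
      by (intro mult_right_mono) auto
    finally show ?thesis .
  qed
  then show ?thesis using that[of "\<bar>L\<bar>"] by simp
qed (use that in auto)

text \<open>Gronwall's inequality applied to \<open>(x - y)\<^sup>2 + (x' - y')\<^sup>2\<close> on the interval between \<open>0\<close>
  and \<open>t\<close>.\<close>
lemma second_order_ode_unique:
  fixes A :: "real \<Rightarrow> real \<Rightarrow> real" and x y x' y' :: "real \<Rightarrow> real"
  assumes lip: "local_lipschitz_halfplane A"
    and I: "is_interval I" "0 \<in> I" "t \<in> I"
    and x: "\<And>s. s \<in> I \<Longrightarrow> x s > 0 \<and> DERIV x s :> x' s \<and> DERIV x' s :> A (x s) (x' s)"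
    and y: "\<And>s. s \<in> I \<Longrightarrow> y s > 0 \<and> DERIV y s :> y' s \<and> DERIV y' s :> A (y s) (y' s)"
    and init: "x 0 = y 0" "x' 0 = y' 0"
  shows "x t = y t"
proof -
  define J where "J = {min 0 t..max 0 t}"
  have JI: "J \<subseteq> I"
  proof
    fix s assume "s \<in> J"
    then show "s \<in> I"
      using I unfolding J_def by (cases "0 \<le> t") (auto intro: mem_is_interval_1_I)
  qed
  have "continuous_on J f" if "\<And>s. s \<in> I \<Longrightarrow> isCont f s" for f
    using JI that by (intro continuous_at_imp_continuous_on) auto
  then have cont: "continuous_on J x" "continuous_on J y" "continuous_on J x'" "continuous_on J y'"
    using x y by (auto intro!: DERIV_isCont)
  have "compact J" by (simp add: J_def)
  moreover have "0 < x s \<and> 0 < y s" if "s \<in> J" for s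
    using x y JI that by blast
  ultimately obtain L where L: "0 \<le> L" and L_bound:
    "\<And>s. s \<in> J \<Longrightarrow> \<bar>A (x s) (x' s) - A (y s) (y' s)\<bar> \<le> L * (\<bar>x s - y s\<bar> + \<bar>x' s - y' s\<bar>)"
    using local_lipschitz_halfplane_on_compact[OF lip _ cont] by blast
  define E where "E s = (x s - y s)^2 + (x' s - y' s)^2" for s
  define E' where "E' s = 2 * (x s - y s) * (x' s - y' s)
      + 2 * (x' s - y' s) * (A (x s) (x' s) - A (y s) (y' s))" for s
  have "E t = 0"
  proof (rule gronwall_zero[of t E E' "1 + 3 * L"])
    fix s assume "s \<in> {min 0 t..max 0 t}"
    then have sJ: "s \<in> J" by (simp add: J_def)
    show "DERIV E s :> E' s"
      unfolding E_def E'_def using x[of s] y[of s] sJ JI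
      by (auto intro!: derivative_eq_intros simp: algebra_simps)
    show "\<bar>E' s\<bar> \<le> (1 + 3 * L) * E s"
      unfolding E_def E'_def by (rule difference_energy_bound[OF L L_bound[OF sJ]])
  qed (auto simp: E_def init)
  then show ?thesis by (simp add: E_def sum_power2_eq_zero_iff)
qed

lemma lipschitz_bound_of_continuous_DERIV:
  fixes f f' :: "real \<Rightarrow> real"
  assumes "\<And>z. z \<in> {m..M} \<Longrightarrow> DERIV f z :> f' z" and "continuous_on {m..M} f'"
  obtains L where "\<And>r1 r2. r1 \<in> {m..M} \<Longrightarrow> r2 \<in> {m..M} \<Longrightarrow> \<bar>f r1 - f r2\<bar> \<le> L * \<bar>r1 - r2\<bar>"
proof (cases "m \<le> M")
  case True
  have "continuous_on {m..M} (\<lambda>z. \<bar>f' z\<bar>)" using assms(2) by (intro continuous_intros)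
  then obtain z0 where z0: "\<And>z. z \<in> {m..M} \<Longrightarrow> \<bar>f' z\<bar> \<le> \<bar>f' z0\<bar>"
    using continuous_attains_sup[of "{m..M}" "\<lambda>z. \<bar>f' z\<bar>"] True
    by (metis compact_Icc atLeastatMost_empty_iff)
  show ?thesis
  proof (rule that)
    fix r1 r2 assume "r1 \<in> {m..M}" "r2 \<in> {m..M}"
    then show "\<bar>f r1 - f r2\<bar> \<le> \<bar>f' z0\<bar> * \<bar>r1 - r2\<bar>"
      using field_differentiable_bound[of "{m..M}" f f' "\<bar>f' z0\<bar>" r1 r2] assms(1) z0
      by (auto intro: has_field_derivative_at_within)
  qed
qed (use that in auto)

lemma local_lipschitz_halfplane_quadratic:
  fixes a a' b b' :: "real \<Rightarrow> real"
  assumes da: "\<And>z. 0 < z \<Longrightarrow> DERIV a z :> a' z" and ca: "\<And>z. 0 < z \<Longrightarrow> isCont a' z"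
    and db: "\<And>z. 0 < z \<Longrightarrow> DERIV b z :> b' z" and cb: "\<And>z. 0 < z \<Longrightarrow> isCont b' z"
  shows "local_lipschitz_halfplane (\<lambda>r p. a r - b r * p^2 / 2)"
  unfolding local_lipschitz_halfplane_def
proof (intro allI impI)
  fix m M P :: real assume m: "0 < m"
  have cont: "continuous_on {m..M} f" if "\<And>z. 0 < z \<Longrightarrow> isCont f z" for f
    using m that by (intro continuous_at_imp_continuous_on) auto
  obtain La where La: "\<And>r1 r2. r1 \<in> {m..M} \<Longrightarrow> r2 \<in> {m..M} \<Longrightarrow> \<bar>a r1 - a r2\<bar> \<le> La * \<bar>r1 - r2\<bar>"
    using lipschitz_bound_of_continuous_DERIV[of m M a a'] da m cont[OF ca] by auto
  obtain Lb where Lb: "\<And>r1 r2. r1 \<in> {m..M} \<Longrightarrow> r2 \<in> {m..M} \<Longrightarrow> \<bar>b r1 - b r2\<bar> \<le> Lb * \<bar>r1 - r2\<bar>"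
    using lipschitz_bound_of_continuous_DERIV[of m M b b'] db m cont[OF cb] by auto
  have "continuous_on {m..M} (\<lambda>z. \<bar>b z\<bar>)"
    using db by (intro cont continuous_intros DERIV_isCont) auto
  then obtain B where B: "\<And>z. z \<in> {m..M} \<Longrightarrow> \<bar>b z\<bar> \<le> B"
    using compact_Icc[of m M] by (metis continuous_attains_sup empty_iff)
  show "\<exists>L. \<forall>r1 r2 p1 p2. r1 \<in> {m..M} \<and> r2 \<in> {m..M} \<and> \<bar>p1\<bar> \<le> P \<and> \<bar>p2\<bar> \<le> P \<longrightarrow>
      \<bar>(a r1 - b r1 * p1^2 / 2) - (a r2 - b r2 * p2^2 / 2)\<bar> \<le> L * (\<bar>r1 - r2\<bar> + \<bar>p1 - p2\<bar>)"
  proof (intro exI[of _ "\<bar>La\<bar> + \<bar>Lb\<bar> * P^2 / 2 + \<bar>B\<bar> * \<bar>P\<bar>"] allI impI)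
    fix r1 r2 p1 p2 assume h: "r1 \<in> {m..M} \<and> r2 \<in> {m..M} \<and> \<bar>p1\<bar> \<le> P \<and> \<bar>p2\<bar> \<le> P"
    have split: "(a r1 - b r1 * p1^2 / 2) - (a r2 - b r2 * p2^2 / 2)
        = (a r1 - a r2) - (b r1 - b r2) * p1^2 / 2 - b r2 * (p1 + p2) * (p1 - p2) / 2"
      by (simp add: field_simps power2_eq_square)
    have "\<bar>a r1 - a r2\<bar> \<le> \<bar>La\<bar> * \<bar>r1 - r2\<bar>"
      using La[of r1 r2] h mult_right_mono[OF abs_ge_self abs_ge_zero, of La "r1 - r2"]
      by linarith
    moreover have "\<bar>(b r1 - b r2) * p1^2 / 2\<bar> \<le> \<bar>Lb\<bar> * P^2 / 2 * \<bar>r1 - r2\<bar>"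
    proof -
      have "\<bar>b r1 - b r2\<bar> \<le> \<bar>Lb\<bar> * \<bar>r1 - r2\<bar>"
        using Lb[of r1 r2] h mult_right_mono[OF abs_ge_self abs_ge_zero, of Lb "r1 - r2"]
        by linarith
      moreover have "p1^2 \<le> P^2" using h power_mono[of "\<bar>p1\<bar>" P 2] by simp
      ultimately have "\<bar>b r1 - b r2\<bar> * p1^2 \<le> (\<bar>Lb\<bar> * \<bar>r1 - r2\<bar>) * P^2"
        by (intro mult_mono) auto
      then show ?thesis by (simp add: abs_mult mult_ac)
    qed
    moreover have "\<bar>b r2 * (p1 + p2) * (p1 - p2) / 2\<bar> \<le> \<bar>B\<bar> * \<bar>P\<bar> * \<bar>p1 - p2\<bar>"
    proof -
      have "\<bar>b r2\<bar> * \<bar>p1 + p2\<bar> \<le> \<bar>B\<bar> * (2 * \<bar>P\<bar>)"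
        using B[of r2] h abs_triangle_ineq[of p1 p2] by (intro mult_mono) auto
      then have "\<bar>b r2\<bar> * \<bar>p1 + p2\<bar> * \<bar>p1 - p2\<bar> \<le> \<bar>B\<bar> * (2 * \<bar>P\<bar>) * \<bar>p1 - p2\<bar>"
        by (rule mult_right_mono) simp
      then show ?thesis by (simp add: abs_mult mult_ac)
    qed
    ultimately have "\<bar>a r1 - a r2\<bar> + \<bar>(b r1 - b r2) * p1^2 / 2\<bar> + \<bar>b r2 * (p1 + p2) * (p1 - p2) / 2\<bar>
        \<le> (\<bar>La\<bar> + \<bar>Lb\<bar> * P^2 / 2) * \<bar>r1 - r2\<bar> + \<bar>B\<bar> * \<bar>P\<bar> * \<bar>p1 - p2\<bar>"
      unfolding distrib_right by (intro add_mono)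
    moreover have "\<bar>x - y - z\<bar> \<le> \<bar>x\<bar> + \<bar>y\<bar> + \<bar>z\<bar>" for x y z :: real
      by linarith
    ultimately have "\<bar>(a r1 - b r1 * p1^2 / 2) - (a r2 - b r2 * p2^2 / 2)\<bar>
        \<le> (\<bar>La\<bar> + \<bar>Lb\<bar> * P^2 / 2) * \<bar>r1 - r2\<bar> + \<bar>B\<bar> * \<bar>P\<bar> * \<bar>p1 - p2\<bar>"
      unfolding split by (meson order_trans)
    also have "\<dots> \<le> (\<bar>La\<bar> + \<bar>Lb\<bar> * P^2 / 2 + \<bar>B\<bar> * \<bar>P\<bar>) * (\<bar>r1 - r2\<bar> + \<bar>p1 - p2\<bar>)"
    proof -
      have "0 \<le> (\<bar>La\<bar> + \<bar>Lb\<bar> * P^2 / 2) * \<bar>p1 - p2\<bar>" "0 \<le> \<bar>B\<bar> * \<bar>P\<bar> * \<bar>r1 - r2\<bar>"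
        by simp_all
      then show ?thesis by (simp only: distrib_left distrib_right)
    qed
    finally show "\<bar>(a r1 - b r1 * p1^2 / 2) - (a r2 - b r2 * p2^2 / 2)\<bar>
        \<le> (\<bar>La\<bar> + \<bar>Lb\<bar> * P^2 / 2 + \<bar>B\<bar> * \<bar>P\<bar>) * (\<bar>r1 - r2\<bar> + \<bar>p1 - p2\<bar>)" .
  qed
qed

section \<open>Homoclinic orbits by quadrature\<close>

lemma odd_of_DERIV_even:
  fixes T f :: "real \<Rightarrow> real"
  assumes dT: "\<And>v. -b < v \<Longrightarrow> v < b \<Longrightarrow> DERIV T v :> f v"
    and even: "\<And>v. f (-v) = f v" and T0: "T 0 = 0" and v: "-b < v" "v < b"
  shows "T (-v) = - T v"
proof -
  have "T v + T (-v) = T 0 + T (-0)"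
  proof (rule DERIV_isconst3[of "-b" b v 0 "\<lambda>v. T v + T (-v)"])
    fix x assume x: "x \<in> {-b<..<b}"
    have "DERIV (\<lambda>v. T (-v)) x :> f (-x) * -1"
      using DERIV_mirror[of T "f (-x)" x] dT[of "-x"] x by simp
    then show "DERIV (\<lambda>v. T v + T (-v)) x :> 0"
      using DERIV_add[OF dT[of x]] x even[of x] by fastforce
  qed (use v in auto)
  then show ?thesis using T0 by simp
qed

lemma unbounded_of_DERIV_ge_inverse_distance:
  fixes T f :: "real \<Rightarrow> real"
  assumes k: "k > 0" and v1: "v1 < b"
    and dT: "\<And>v. v1 \<le> v \<Longrightarrow> v < b \<Longrightarrow> DERIV T v :> f v"
    and f_ge: "\<And>v. v1 \<le> v \<Longrightarrow> v < b \<Longrightarrow> k / (b - v) \<le> f v"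
  obtains v where "v1 \<le> v" "v < b" "M \<le> T v"
proof -
  define H where "H v = T v + k * ln (b - v)" for v
  have H_mono: "H v1 \<le> H v" if "v1 \<le> v" "v < b" for v
  proof (rule DERIV_nonneg_imp_nondecreasing[OF that(1)])
    fix x assume x: "v1 \<le> x" "x \<le> v"
    have "DERIV H x :> f x - k / (b - x)"
      unfolding H_def using dT[of x] x that by (auto intro!: derivative_eq_intros simp: field_simps)
    moreover have "f x - k / (b - x) \<ge> 0" using f_ge[of x] x that by simp
    ultimately show "\<exists>y. DERIV H x :> y \<and> 0 \<le> y" by blast
  qed
  define q where "q = exp (- \<bar>M - T v1\<bar> / k)"
  have q: "0 < q" "q \<le> 1" using k by (auto simp: q_def)
  define v where "v = b - (b - v1) * q"
  have "(b - v1) * q \<le> b - v1" using q v1 by (intro mult_left_le) auto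
  then have v: "v1 \<le> v" "v < b"
    unfolding v_def using q v1 by (linarith, simp)
  have "ln (b - v) = ln (b - v1) - \<bar>M - T v1\<bar> / k"
    using q v1 by (simp add: v_def ln_mult q_def)
  then have "T v = H v - k * ln (b - v1) + \<bar>M - T v1\<bar>"
    using k by (simp add: H_def field_simps)
  also have "\<dots> \<ge> T v1 + \<bar>M - T v1\<bar>"
    using H_mono[OF v] by (simp add: H_def)
  finally have "M \<le> T v" by linarith
  with v that show ?thesis by blast
qed

lemma inverse_of_DERIV_pos_onto:
  fixes T f :: "real \<Rightarrow> real"
  assumes dT: "\<And>v. a < v \<Longrightarrow> v < b \<Longrightarrow> DERIV T v :> f v"
    and f_pos: "\<And>v. a < v \<Longrightarrow> v < b \<Longrightarrow> 0 < f v"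
    and onto: "\<And>t. \<exists>v. a < v \<and> v < b \<and> T v = t"
  obtains V where "\<And>t. a < V t \<and> V t < b \<and> T (V t) = t" "\<And>v. a < v \<Longrightarrow> v < b \<Longrightarrow> V (T v) = v"
    "strict_mono V" "\<And>t. DERIV V t :> 1 / f (V t)"
proof -
  have T_less: "T u < T v" if "a < u" "u < v" "v < b" for u v
  proof (rule DERIV_pos_imp_increasing[of u v])
    fix x assume "u \<le> x" "x \<le> v"
    then show "\<exists>y. DERIV T x :> y \<and> 0 < y"
      using that dT[of x] f_pos[of x] by (intro exI[of _ "f x"]) auto
  qed (use that in auto)
  have T_inj: "u = v" if "a < u" "u < b" "a < v" "v < b" "T u = T v" for u v
    using T_less[of u v] T_less[of v u] that by (cases u v rule: linorder_cases) auto
  define V where "V t = (THE v. a < v \<and> v < b \<and> T v = t)" for t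
  have VT: "a < V t \<and> V t < b \<and> T (V t) = t" for t
  proof -
    have "\<exists>!v. a < v \<and> v < b \<and> T v = t" using onto[of t] T_inj by blast
    then show ?thesis unfolding V_def by (rule theI')
  qed
  have TV: "V (T v) = v" if "a < v" "v < b" for v
    by (rule T_inj) (use VT[of "T v"] that in auto)
  have V_mono: "strict_mono V"
  proof (rule strict_monoI, rule ccontr)
    fix s t :: real assume "s < t" "\<not> V s < V t"
    then have "V t = V s \<or> V t < V s" by linarith
    then have "t \<le> s"
    proof
      assume "V t < V s"
      then show "t \<le> s" using T_less[of "V t" "V s"] VT[of s] VT[of t] by simp
    qed (metis VT order_refl)
    with \<open>s < t\<close> show False by simp
  qed
  have dV: "DERIV V t :> 1 / f (V t)" for t
  proof -
    define e where "e = min (b - V t) (V t - a) / 2"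
    have e: "e > 0" using VT[of t] by (auto simp: e_def)
    have "e < b - V t" "e < V t - a" using VT[of t] e by (auto simp: e_def)
    then have near: "a < z \<and> z < b" if "\<bar>z - V t\<bar> \<le> e" for z
      using that abs_le_iff[of "z - V t" e] by linarith
    have "isCont V (T (V t))"
      by (rule isCont_inverse_function[OF e])
        (use near TV DERIV_isCont[OF dT] in auto)
    then have "isCont V t" using VT[of t] by simp
    have "DERIV V t :> inverse (f (V t))"
      by (rule DERIV_inverse_function[where f=T and a="t - 1" and b="t + 1"])
        (use dT[of "V t"] VT f_pos[of "V t"] \<open>isCont V t\<close> in auto)
    then show ?thesis by (simp add: divide_inverse)
  qed
  show ?thesis using that VT TV V_mono dV by blast
qed

lemma tendsto_at_top_of_inverse:
  fixes V T :: "real \<Rightarrow> real"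
  assumes "strict_mono V" "\<And>t. V t < b" "c < b" "\<And>v. c < v \<Longrightarrow> v < b \<Longrightarrow> V (T v) = v"
  shows "(V \<longlongrightarrow> b) at_top"
proof (rule order_tendstoI)
  fix a assume "a < b"
  define v where "v = (max a c + b) / 2"
  have v: "c < v" "v < b" "a < v" using \<open>a < b\<close> assms(3) by (auto simp: v_def)
  have "eventually (\<lambda>t. T v < t) at_top" by (rule eventually_gt_at_top)
  then show "eventually (\<lambda>t. a < V t) at_top"
  proof (rule eventually_mono)
    fix t assume "T v < t"
    then have "V (T v) < V t" by (rule strict_monoD[OF assms(1)])
    then show "a < V t" using assms(4)[OF v(1,2)] v(3) by simp
  qed
next
  fix a assume "b < a"
  then have "V t < a" for t using assms(2)[of t] by linarith
  then show "eventually (\<lambda>t. V t < a) at_top" by simp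
qed

lemma inverse_of_odd_increasing_unbounded:
  fixes T f :: "real \<Rightarrow> real"
  assumes b: "b > 0"
    and dT: "\<And>v. -b < v \<Longrightarrow> v < b \<Longrightarrow> DERIV T v :> f v"
    and f_pos: "\<And>v. -b < v \<Longrightarrow> v < b \<Longrightarrow> f v > 0"
    and odd: "\<And>v. -b < v \<Longrightarrow> v < b \<Longrightarrow> T (-v) = - T v"
    and unbounded: "\<And>M. \<exists>v. 0 \<le> v \<and> v < b \<and> M \<le> T v"
  obtains V where "\<And>t. -b < V t \<and> V t < b" "\<And>t. DERIV V t :> 1 / f (V t)"
    "V 0 = 0" "\<And>t. V (-t) = - V t" "strict_mono V" "(V \<longlongrightarrow> b) at_top" "(V \<longlongrightarrow> -b) at_bot"
proof -
  have "\<exists>v. -b < v \<and> v < b \<and> T v = t" for t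
  proof -
    obtain w where w: "0 \<le> w" "w < b" "\<bar>t\<bar> \<le> T w" using unbounded by blast
    have "T (-w) \<le> t" "t \<le> T w" using odd[of w] w b by auto
    moreover have "continuous_on {-w..w} T"
      using w b DERIV_isCont[OF dT] by (intro continuous_at_imp_continuous_on ballI) auto
    ultimately obtain v where "-w \<le> v" "v \<le> w" "T v = t"
      using IVT'[of T "-w" t w] w by auto
    then show ?thesis using w by (intro exI[of _ v]) auto
  qed
  then obtain V where VT: "\<And>t. -b < V t \<and> V t < b \<and> T (V t) = t"
    and TV: "\<And>v. -b < v \<Longrightarrow> v < b \<Longrightarrow> V (T v) = v"
    and V_mono: "strict_mono V" and dV: "\<And>t. DERIV V t :> 1 / f (V t)"
    using inverse_of_DERIV_pos_onto[of "-b" b T f] dT f_pos by blast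
  have V_odd: "V (-t) = - V t" for t
  proof -
    have "T (- V t) = - t" using odd[of "V t"] VT[of t] by simp
    then have "V (-t) = V (T (- V t))" by simp
    also have "\<dots> = - V t" by (rule TV) (use VT[of t] in linarith)+
    finally show ?thesis .
  qed
  have V0: "V 0 = 0" using V_odd[of 0] by simp
  have V_top: "(V \<longlongrightarrow> b) at_top"
    using tendsto_at_top_of_inverse[OF V_mono _ _ TV] VT b by auto
  have "((\<lambda>t. V (-t)) \<longlongrightarrow> -b) at_top"
    unfolding V_odd by (intro tendsto_minus V_top)
  then have V_bot: "(V \<longlongrightarrow> -b) at_bot"
    by (simp add: filterlim_at_bot_mirror)
  show ?thesis using that VT dV V0 V_odd V_mono V_top V_bot by blast
qed

lemma quadratic_bound_at_double_zero:
  fixes f f' :: "real \<Rightarrow> real"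
  assumes df: "\<And>z. a \<le> z \<Longrightarrow> z \<le> l \<Longrightarrow> DERIV f z :> f' z"
    and f'_diff: "f' differentiable (at l)" and fl: "f l = 0" and f'l: "f' l = 0"
  obtains L \<eta> where "L > 0" "\<eta> > 0" "\<And>z. a \<le> z \<Longrightarrow> l - \<eta> < z \<Longrightarrow> z < l \<Longrightarrow> \<bar>f z\<bar> \<le> L * (l - z)^2"
proof -
  obtain dl where dl: "DERIV f' l :> dl" using f'_diff by (auto simp: real_differentiable_def)
  define L where "L = \<bar>dl\<bar> + 1"
  have "((\<lambda>y. (f' y - f' l) / (y - l)) \<longlongrightarrow> dl) (at l)"
    using dl by (simp add: has_field_derivative_iff)
  then obtain \<eta> where \<eta>: "\<eta> > 0"
    "\<And>y. y \<noteq> l \<Longrightarrow> \<bar>y - l\<bar> < \<eta> \<Longrightarrow> \<bar>(f' y - f' l) / (y - l) - dl\<bar> < 1"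
    using LIM_D[of _ dl l 1] by force
  have f'_bound: "\<bar>f' y\<bar> \<le> L * \<bar>y - l\<bar>" if "y \<noteq> l" "\<bar>y - l\<bar> < \<eta>" for y
  proof -
    have "\<bar>f' y / (y - l) - dl\<bar> < 1" using \<eta>(2)[OF that] f'l by simp
    then have "\<bar>f' y / (y - l)\<bar> \<le> L"
      using abs_triangle_ineq2[of "f' y / (y - l)" dl] unfolding L_def by linarith
    then show ?thesis using that by (simp add: abs_divide divide_le_eq)
  qed
  have L: "L > 0" by (simp add: L_def)
  have "\<bar>f z\<bar> \<le> L * (l - z)^2" if z: "a \<le> z" "l - \<eta> < z" "z < l" for z
  proof -
    obtain \<xi> where \<xi>: "z < \<xi>" "\<xi> < l" "f l - f z = (l - z) * f' \<xi>"
      using MVT2[of z l f f'] z df by auto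
    have "- f z = (l - z) * f' \<xi>" using \<xi>(3) fl by simp
    then have "\<bar>f z\<bar> = (l - z) * \<bar>f' \<xi>\<bar>"
      using z by (metis abs_minus_cancel abs_mult abs_of_pos diff_gt_0_iff_gt)
    also have "\<dots> \<le> (l - z) * (L * (l - z))"
    proof (intro mult_left_mono)
      have "\<bar>f' \<xi>\<bar> \<le> L * (l - \<xi>)" using f'_bound[of \<xi>] \<xi> z by simp
      also have "\<dots> \<le> L * (l - z)" using \<xi> L by (intro mult_left_mono) auto
      finally show "\<bar>f' \<xi>\<bar> \<le> L * (l - z)" .
    qed (use z in simp)
    finally show ?thesis by (simp add: power2_eq_square mult_ac)
  qed
  with L \<eta>(1) that show ?thesis by blast
qed

locale homoclinic_potential =
  fixes D D' :: "real \<Rightarrow> real" and l :: real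
  assumes l_pos: "0 < l"
    and DERIV_D: "\<And>z. 0 \<le> z \<Longrightarrow> z \<le> l \<Longrightarrow> DERIV D z :> D' z"
    and D'_differentiable_at_l: "D' differentiable (at l)"
    and D_0: "D 0 = 0" and D'_0_pos: "0 < D' 0"
    and D_pos: "\<And>z. 0 < z \<Longrightarrow> z < l \<Longrightarrow> 0 < D z"
    and D_l: "D l = 0" and D'_l: "D' l = 0"
begin

definition slope :: "real \<Rightarrow> real" where
  "slope z = (if z = 0 then D' 0 else D z / z)"

lemma slope_pos: "0 \<le> z \<Longrightarrow> z < l \<Longrightarrow> 0 < slope z"
  using D'_0_pos D_pos[of z] by (auto simp: slope_def)

lemma slope_l: "slope l = 0"
  using l_pos D_l by (simp add: slope_def)

lemma isCont_slope:
  assumes "0 \<le> z" "z \<le> l"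
  shows "isCont slope z"
proof (cases "z = 0")
  case True
  have "((\<lambda>y. (D y - D 0) / (y - 0)) \<longlongrightarrow> D' 0) (at 0)"
    using DERIV_D[of 0] l_pos by (auto simp: has_field_derivative_iff)
  then have "(slope \<longlongrightarrow> D' 0) (at 0)"
    by (rule Lim_transform_eventually) (auto simp: eventually_at_filter slope_def D_0)
  then show ?thesis using True by (simp add: isCont_def slope_def)
next
  case False
  have "eventually (\<lambda>y. y \<in> {0<..}) (nhds z)"
    by (rule eventually_nhds_in_open) (use assms False in auto)
  then have "eventually (\<lambda>y. slope y = D y / y) (nhds z)"
    by (rule eventually_mono) (auto simp: slope_def)
  moreover have "isCont (\<lambda>y. D y / y) z"
    using DERIV_isCont[OF DERIV_D[OF assms]] False by (auto intro!: continuous_intros)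
  ultimately show ?thesis by (simp add: isCont_cong)
qed

lemma DERIV_slope:
  assumes "0 < z" "z \<le> l"
  shows "DERIV slope z :> (D' z * z - D z) / z^2"
proof (rule has_field_derivative_transform_within_open[of "\<lambda>z. D z / z" _ z "{0<..}"])
  show "DERIV (\<lambda>z. D z / z) z :> (D' z * z - D z) / z^2"
    using DERIV_D[of z] assms
    by (auto intro!: derivative_eq_intros simp: field_simps power2_eq_square)
qed (use assms in \<open>auto simp: slope_def\<close>)

lemma square_less_of_bounds: "-sqrt l < v \<Longrightarrow> v < sqrt l \<Longrightarrow> v^2 < l"
  using real_sqrt_less_iff[of "v^2" l] by (simp add: abs_less_iff)

lemma isCont_slope_square:
  assumes "-sqrt l \<le> v" "v \<le> sqrt l"
  shows "isCont (\<lambda>v. slope (v^2)) v"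
proof -
  have "v^2 \<le> l"
    using assms real_sqrt_le_iff[of "v^2" l] by (simp add: abs_le_iff)
  then show ?thesis
    using isCont_slope[of "v^2"] by (auto intro!: continuous_intros isCont_o2[where f="\<lambda>v. v^2"])
qed

lemma time_map_exists:
  obtains T where "\<And>v. -sqrt l < v \<Longrightarrow> v < sqrt l \<Longrightarrow> DERIV T v :> 2 / sqrt (slope (v^2))"
    "T 0 = 0"
proof -
  have "isCont (\<lambda>v. 2 / sqrt (slope (v^2))) v" if "-sqrt l < v" "v < sqrt l" for v
    using isCont_slope_square[of v] that slope_pos[of "v^2"] square_less_of_bounds[OF that]
    by (auto intro!: continuous_intros isCont_o2[where g=sqrt and f="\<lambda>v. slope (v^2)"])
  then have "\<exists>T0. \<forall>v. -sqrt l < v \<and> v < sqrt l \<longrightarrow>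
      (T0 has_vector_derivative 2 / sqrt (slope (v^2))) (at v)"
    using einterval_antiderivative[of "ereal (-sqrt l)" "ereal (sqrt l)"
        "\<lambda>v. 2 / sqrt (slope (v^2))"] l_pos
    by auto
  then obtain T0 where T0: "\<And>v. -sqrt l < v \<Longrightarrow> v < sqrt l \<Longrightarrow>
      (T0 has_vector_derivative 2 / sqrt (slope (v^2))) (at v)"
    by blast
  show ?thesis
  proof (rule that[of "\<lambda>v. T0 v - T0 0"])
    fix v assume "-sqrt l < v" "v < sqrt l"
    then show "DERIV (\<lambda>v. T0 v - T0 0) v :> 2 / sqrt (slope (v^2))"
      using T0 unfolding has_real_derivative_iff_has_vector_derivative[symmetric]
      by (auto intro!: derivative_eq_intros)
  qed simp
qed

text \<open>Since \<open>D\<close> has a double zero at \<open>l\<close>, the time density \<open>2 / \<surd>(slope v\<^sup>2)\<close> blows up like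
  \<open>1 / (\<surd>l - v)\<close>, which is not integrable: the orbit needs infinite time to reach \<open>l\<close>.\<close>
lemma time_density_ge_inverse_distance:
  obtains k v1 where "0 < k" "0 < v1" "v1 < sqrt l"
    "\<And>v. v1 \<le> v \<Longrightarrow> v < sqrt l \<Longrightarrow> k / (sqrt l - v) \<le> 2 / sqrt (slope (v^2))"
proof -
  define b where "b = sqrt l"
  have b: "b > 0" "b^2 = l" using l_pos by (auto simp: b_def)
  obtain L \<eta> where L: "L > 0" "\<eta> > 0"
    and D_bound: "\<And>z. 0 \<le> z \<Longrightarrow> l - \<eta> < z \<Longrightarrow> z < l \<Longrightarrow> \<bar>D z\<bar> \<le> L * (l - z)^2"
    using quadratic_bound_at_double_zero[OF DERIV_D D'_differentiable_at_l D_l D'_l] by blast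
  define v1 where "v1 = max (b/2) (sqrt (max 0 (l - \<eta>/2)))"
  have v1: "0 < v1" "v1 < b"
  proof -
    show "0 < v1" using b by (auto simp: v1_def)
    have "sqrt (max 0 (l - \<eta>/2)) < sqrt l" using l_pos L by (intro real_sqrt_less_mono) auto
    then show "v1 < b" using b by (auto simp: v1_def b_def)
  qed
  define k where "k = 1 / (2 * sqrt L)"
  have "k / (b - v) \<le> 2 / sqrt (slope (v^2))" if v: "v1 \<le> v" "v < b" for v
  proof -
    have vpos: "0 < v" "b / 2 \<le> v" using v1 v by (auto simp: v1_def)
    have "sqrt (max 0 (l - \<eta>/2)) \<le> v" using v by (auto simp: v1_def)
    then have "l - \<eta>/2 \<le> v^2" using real_sqrt_le_iff[of "max 0 (l - \<eta>/2)" "v^2"] vpos by simp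
    moreover have v2l: "v^2 < l" using square_less_of_bounds[of v] v vpos b by (simp add: b_def)
    ultimately have "D (v^2) \<le> L * (l - v^2)^2" using D_bound[of "v^2"] L by auto
    also have "\<dots> = L * (b - v)^2 * (b + v)^2"
      using b by (simp add: power2_eq_square algebra_simps)
    also have "\<dots> \<le> L * (b - v)^2 * (16 * v^2)"
      using L vpos b power_mono[of "b + v" "4 * v" 2] by (intro mult_left_mono) auto
    finally have "slope (v^2) \<le> 16 * L * (b - v)^2"
      using vpos by (simp add: slope_def divide_le_eq mult_ac)
    then have "sqrt (slope (v^2)) \<le> 4 * sqrt L * (b - v)"
      using real_sqrt_le_mono v by (fastforce simp: real_sqrt_mult)
    moreover have "sqrt (slope (v^2)) > 0" using slope_pos[of "v^2"] v2l by simp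
    ultimately have "2 / (4 * sqrt L * (b - v)) \<le> 2 / sqrt (slope (v^2))"
      using L v by (intro divide_left_mono) auto
    then show ?thesis by (simp add: k_def)
  qed
  moreover have "0 < k" using L by (simp add: k_def)
  ultimately show ?thesis using that v1 by (simp add: b_def)
qed

definition velocity :: "real \<Rightarrow> real" where
  "velocity v = v * sqrt (slope (v^2))"

lemma DERIV_velocity:
  assumes "-sqrt l < v" "v < sqrt l"
  shows "DERIV velocity v :> D' (v^2) / sqrt (slope (v^2))"
proof (cases "v = 0")
  case True
  have "((\<lambda>y. sqrt (slope (y^2))) \<longlongrightarrow> sqrt (slope 0)) (at 0)"
    using isCont_slope_square[of 0] l_pos by (auto intro!: tendsto_intros simp: isCont_def)
  then have "((\<lambda>y. (velocity y - velocity 0) / (y - 0)) \<longlongrightarrow> sqrt (slope 0)) (at 0)"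
    by (rule Lim_transform_eventually) (auto simp: eventually_at_filter velocity_def)
  moreover have "sqrt (slope 0) = D' 0 / sqrt (slope 0)"
    using D'_0_pos by (simp add: slope_def real_div_sqrt)
  ultimately show ?thesis using True by (simp add: has_field_derivative_iff)
next
  case False
  define z where "z = v^2"
  define q where "q = sqrt (slope z)"
  have z: "0 < z" "z < l" using False square_less_of_bounds[OF assms] by (auto simp: z_def)
  have q: "0 < q" "D z = q * q * z"
    using slope_pos[of z] z D_pos[of z] by (auto simp: q_def slope_def)
  have "DERIV slope (v^2) :> (D' z * z - D z) / z^2"
    using DERIV_slope[of z] z by (simp add: z_def)
  moreover have "DERIV (\<lambda>v. v^2) v :> 2 * v" by (auto intro!: derivative_eq_intros)
  ultimately have "DERIV (\<lambda>v. slope (v^2)) v :> (D' z * z - D z) / z^2 * (2 * v)"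
    by (rule DERIV_chain2)
  then have "DERIV velocity v :> q + v * (inverse q / 2 * ((D' z * z - D z) / z^2 * (2 * v)))"
    unfolding velocity_def using q by (auto intro!: derivative_eq_intros simp: q_def z_def)
  moreover have "q + v * (inverse q / 2 * ((D' z * z - D z) / z^2 * (2 * v)))
      = q + (D' z * z - D z) * (v * v) / (q * z^2)"
    using q z by (simp add: field_simps)
  also have "\<dots> = q + (D' z - q * q) / q"
    using q z by (simp add: z_def[symmetric] power2_eq_square[symmetric] field_simps)
      (simp add: power2_eq_square algebra_simps)
  also have "\<dots> = D' z / q" using q by (simp add: field_simps)
  ultimately show ?thesis by (simp add: z_def q_def)
qed

lemma slope_square_pos: "-sqrt l < v \<Longrightarrow> v < sqrt l \<Longrightarrow> 0 < slope (v^2)"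
  using slope_pos square_less_of_bounds by simp

lemma velocity_square:
  assumes "-sqrt l < v" "v < sqrt l"
  shows "velocity v ^ 2 = D (v^2)"
  using D_0 D_pos[of "v^2"] square_less_of_bounds[OF assms]
  by (cases "v = 0") (auto simp: velocity_def slope_def power_mult_distrib)

lemma isCont_velocity: "-sqrt l \<le> v \<Longrightarrow> v \<le> sqrt l \<Longrightarrow> isCont velocity v"
  unfolding velocity_def using isCont_slope_square[of v]
  by (auto intro!: continuous_intros isCont_o2[where g=sqrt and f="\<lambda>v. slope (v^2)"])

lemma time_map_inverse:
  obtains V where "\<And>t. -sqrt l < V t \<and> V t < sqrt l" "\<And>t. DERIV V t :> sqrt (slope (V t ^ 2)) / 2"
    "V 0 = 0" "\<And>t. V (-t) = - V t" "strict_mono V"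
    "(V \<longlongrightarrow> sqrt l) at_top" "(V \<longlongrightarrow> -sqrt l) at_bot"
proof -
  define b where "b = sqrt l"
  have b: "0 < b" using l_pos by (simp add: b_def)
  obtain T where dT: "\<And>v. -b < v \<Longrightarrow> v < b \<Longrightarrow> DERIV T v :> 2 / sqrt (slope (v^2))"
    and T0: "T 0 = 0"
    using time_map_exists unfolding b_def by blast
  obtain k v1 where k: "0 < k" "0 < v1" "v1 < b"
    and density: "\<And>v. v1 \<le> v \<Longrightarrow> v < b \<Longrightarrow> k / (b - v) \<le> 2 / sqrt (slope (v^2))"
    using time_density_ge_inverse_distance unfolding b_def by blast
  have "\<exists>v. 0 \<le> v \<and> v < b \<and> M \<le> T v" for M
  proof -
    have "DERIV T v :> 2 / sqrt (slope (v^2))" if "v1 \<le> v" "v < b" for v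
      using dT that k by simp
    then obtain v where "v1 \<le> v" "v < b" "M \<le> T v"
      by (rule unbounded_of_DERIV_ge_inverse_distance[OF k(1,3) _ density])
    then show ?thesis using k by (intro exI[of _ v]) auto
  qed
  moreover have "T (-v) = - T v" if "-b < v" "v < b" for v
    using odd_of_DERIV_even[OF dT _ T0 that] by simp
  ultimately obtain V where "\<And>t. -b < V t \<and> V t < b"
    "\<And>t. DERIV V t :> 1 / (2 / sqrt (slope (V t ^ 2)))"
    "V 0 = 0" "\<And>t. V (-t) = - V t" "strict_mono V" "(V \<longlongrightarrow> b) at_top" "(V \<longlongrightarrow> -b) at_bot"
    using inverse_of_odd_increasing_unbounded[OF b dT] slope_square_pos unfolding b_def by auto
  then show ?thesis using that unfolding b_def by auto
qed

text \<open>The orbit is \<open>w = V\<^sup>2\<close>, where \<open>V\<close> inverts the time map \<open>T(v) = \<integral>\<^sub>0\<^sup>v 2 / \<surd>(slope s\<^sup>2) ds\<close>;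
  the substitution \<open>w = v\<^sup>2\<close> removes the square-root singularity of \<open>w' = \<surd>D(w)\<close> at the turning
  point \<open>w = 0\<close>.\<close>
theorem homoclinic_orbit:
  obtains w w' where "\<And>t. DERIV w t :> w' t" "\<And>t. DERIV w' t :> D' (w t) / 2"
    "\<And>t. (w' t)^2 = D (w t)" "\<And>t. 0 \<le> w t \<and> w t < l" "w 0 = 0" "w' 0 = 0"
    "\<And>t. w (-t) = w t" "strict_mono_on {0..} w"
    "\<And>F. F \<in> {at_top, at_bot} \<Longrightarrow> (w \<longlongrightarrow> l) F \<and> (w' \<longlongrightarrow> 0) F \<and> ((\<lambda>t. D' (w t)) \<longlongrightarrow> 0) F"
proof -
  obtain V where V: "\<And>t. -sqrt l < V t \<and> V t < sqrt l"
    and dV: "\<And>t. DERIV V t :> sqrt (slope (V t ^ 2)) / 2"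
    and V0: "V 0 = 0" and V_odd: "\<And>t. V (-t) = - V t" and V_mono: "strict_mono V"
    and V_lim: "(V \<longlongrightarrow> sqrt l) at_top" "(V \<longlongrightarrow> -sqrt l) at_bot"
    by (rule time_map_inverse) (rule that)
  have sqrt_pos: "0 < sqrt (slope (V t ^ 2))" for t
    using slope_square_pos[of "V t"] V[of t] by simp
  define w where "w t = V t ^ 2" for t
  define w' where "w' t = velocity (V t)" for t
  have dw: "DERIV w t :> w' t" for t
    unfolding w_def w'_def velocity_def
    using dV[of t] by (auto intro!: derivative_eq_intros)
  have dw': "DERIV w' t :> D' (w t) / 2" for t
  proof -
    have "DERIV w' t :> D' (V t ^ 2) / sqrt (slope (V t ^ 2)) * (sqrt (slope (V t ^ 2)) / 2)"
      unfolding w'_def using DERIV_chain2[OF DERIV_velocity[of "V t"] dV[of t]] V[of t] by simp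
    then show ?thesis using sqrt_pos[of t] by (simp add: w_def)
  qed
  have w_mono: "strict_mono_on {0..} w"
  proof (rule strict_mono_onI)
    fix r s :: real assume "r \<in> {0..}" "s \<in> {0..}" "r < s"
    then have "V 0 \<le> V r" "V r < V s"
      using V_mono by (auto simp: strict_mono_less_eq strict_mono_less)
    then show "w r < w s" unfolding w_def using V0 by (intro power_strict_mono) auto
  qed
  have w_lim: "(w \<longlongrightarrow> l) F \<and> (w' \<longlongrightarrow> 0) F \<and> ((\<lambda>t. D' (w t)) \<longlongrightarrow> 0) F"
    if F: "F \<in> {at_top, at_bot}" for F
  proof -
    obtain c where c: "(V \<longlongrightarrow> c) F" "c = sqrt l \<or> c = -sqrt l" using F V_lim by auto
    have w_lim: "(w \<longlongrightarrow> l) F"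
      using tendsto_power[OF c(1), of 2] c(2) l_pos unfolding w_def by auto
    have "velocity c = 0" using c(2) slope_l l_pos by (auto simp: velocity_def)
    then have "(w' \<longlongrightarrow> 0) F"
      unfolding w'_def using isCont_tendsto_compose[OF isCont_velocity c(1)] c(2) l_pos by auto
    moreover have "((\<lambda>t. D' (w t)) \<longlongrightarrow> 0) F"
      using isCont_tendsto_compose[OF _ w_lim] D'_differentiable_at_l D'_l
      by (metis differentiable_imp_continuous_within continuous_at)
    ultimately show ?thesis using w_lim by blast
  qed
  show ?thesis
  proof (rule that[OF dw dw' _ _ _ _ _ w_mono w_lim])
    show "(w' t)^2 = D (w t)" "0 \<le> w t \<and> w t < l" "w (-t) = w t" for t
      using velocity_square V square_less_of_bounds V_odd by (simp_all add: w_def w'_def)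
    show "w 0 = 0" "w' 0 = 0" using V0 by (simp_all add: w_def w'_def velocity_def)
  qed
qed

end

section \<open>The travelling wave profile\<close>

locale korteweg_profile =
  fixes K g G :: "real \<Rightarrow> real"
  assumes DERIV_g: "\<And>x. 0 < x \<Longrightarrow> DERIV g x :> deriv g x"
    and DERIV_g': "\<And>x. 0 < x \<Longrightarrow> DERIV (deriv g) x :> deriv (deriv g) x"
    and DERIV_g'': "\<And>x. 0 < x \<Longrightarrow> DERIV (deriv (deriv g)) x :> deriv (deriv (deriv g)) x"
    and DERIV_K: "\<And>x. 0 < x \<Longrightarrow> DERIV K x :> deriv K x"
    and DERIV_K': "\<And>x. 0 < x \<Longrightarrow> DERIV (deriv K) x :> deriv (deriv K) x"
    and DERIV_K'': "\<And>x. 0 < x \<Longrightarrow> DERIV (deriv (deriv K)) x :> deriv (deriv (deriv K)) x"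
    and K_pos: "\<And>x. 0 < x \<Longrightarrow> 0 < K x"
    and g_1: "g 1 = 0" and g'_1: "deriv g 1 = 1"
    and Gamma_nonzero: "deriv (deriv g) 1 + 3 \<noteq> 0"
    and DERIV_G: "\<And>x. 0 < x \<Longrightarrow> DERIV G x :> g x"
    and G_1: "G 1 = 0"
begin

abbreviation "g' \<equiv> deriv g"
abbreviation "g'' \<equiv> deriv g'"
abbreviation "K' \<equiv> deriv K"
abbreviation "K'' \<equiv> deriv K'"

definition pot :: "real \<Rightarrow> real \<Rightarrow> real" where
  "pot c r = - (c^2 / (2 * r)) * (r - 1)^2 + G r"
definition pot' :: "real \<Rightarrow> real \<Rightarrow> real" where
  "pot' c r = - (c^2) * (r - 1) / r + c^2 * (r - 1)^2 / (2 * r^2) + g r"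
definition pot'' :: "real \<Rightarrow> real \<Rightarrow> real" where
  "pot'' c r = g' r - c^2 / r^3"
definition pot''' :: "real \<Rightarrow> real \<Rightarrow> real" where
  "pot''' c r = g'' r + 3 * c^2 / r^4"

lemma DERIV_pot: "0 < r \<Longrightarrow> DERIV (pot c) r :> pot' c r"
  unfolding pot_def pot'_def
  by (rule derivative_eq_intros refl DERIV_G | simp)+ (simp add: field_simps power2_eq_square)

lemma DERIV_pot': "0 < r \<Longrightarrow> DERIV (pot' c) r :> pot'' c r"
  unfolding pot'_def pot''_def
  by (rule derivative_eq_intros refl DERIV_g | simp)+ (simp add: field_simps eval_nat_numeral)

lemma DERIV_pot'': "0 < r \<Longrightarrow> DERIV (pot'' c) r :> pot''' c r"
  unfolding pot''_def pot'''_def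
  by (rule derivative_eq_intros refl DERIV_g' | simp)+ (simp add: field_simps eval_nat_numeral)

lemma pot_at_1: "pot c 1 = 0" "pot' c 1 = 0" "pot'' c 1 = 1 - c^2"
  by (simp_all add: pot_def pot'_def pot''_def G_1 g_1 g'_1)

lemma Feps_eq_pot: "Feps G \<epsilon> r = pot (sqrt (1 - \<epsilon>^2)) r"
  by (simp add: Feps_def pot_def)

definition \<Gamma> :: real where "\<Gamma> = g'' 1 + 3"

text \<open>\<open>\<rho>\<^sub>m = 1 + dir * y0\<close> with \<open>y0 > 0\<close>: below \<open>1\<close> if \<open>\<Gamma> > 0\<close>, above \<open>1\<close> if \<open>\<Gamma> < 0\<close>.\<close>
definition dir :: real where "dir = - sgn \<Gamma>"

lemma Gamma_pos_abs: "0 < \<bar>\<Gamma>\<bar>"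
  using Gamma_nonzero by (simp add: \<Gamma>_def)

lemma dir_cases: "dir = 1 \<or> dir = -1"
  using Gamma_nonzero by (auto simp: dir_def \<Gamma>_def sgn_if)

lemma abs_dir: "\<bar>dir\<bar> = 1"
  using dir_cases by auto

lemma DERIV_pot_along_dir:
  assumes "0 \<le> y" "y \<le> 1/2"
  shows "DERIV (\<lambda>y. pot c (1 + dir * y)) y :> dir * pot' c (1 + dir * y)"
    "DERIV (\<lambda>y. dir * pot' c (1 + dir * y)) y :> pot'' c (1 + dir * y)"
    "DERIV (\<lambda>y. pot'' c (1 + dir * y)) y :> dir * pot''' c (1 + dir * y)"
proof -
  have r: "0 < 1 + dir * y" using assms dir_cases by auto
  have ray: "DERIV (\<lambda>y. 1 + dir * y) y :> dir" by (auto intro!: derivative_eq_intros)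
  show "DERIV (\<lambda>y. pot c (1 + dir * y)) y :> dir * pot' c (1 + dir * y)"
    using DERIV_chain2[OF DERIV_pot[OF r] ray] by (simp add: mult.commute)
  show "DERIV (\<lambda>y. dir * pot' c (1 + dir * y)) y :> pot'' c (1 + dir * y)"
    using DERIV_cmult[OF DERIV_chain2[OF DERIV_pot'[OF r] ray], of dir] dir_cases by auto
  show "DERIV (\<lambda>y. pot'' c (1 + dir * y)) y :> dir * pot''' c (1 + dir * y)"
    using DERIV_chain2[OF DERIV_pot''[OF r] ray] by (simp add: mult.commute)
qed

text \<open>Near the sonic state \<open>(r, c) = (1, 1)\<close>, \<open>pot'''\<close> stays within \<open>\<bar>\<Gamma>\<bar>\<close> of its value \<open>\<Gamma>\<close>.\<close>
lemma dir_pot'''_neg_near_sonic: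
  obtains d where "0 < d" "d \<le> 1/2"
    "\<And>c r. \<bar>r - 1\<bar> \<le> d \<Longrightarrow> c^2 \<le> 1 \<Longrightarrow> 1 - c^2 < \<bar>\<Gamma>\<bar> / 64 \<Longrightarrow> dir * pot''' c r < 0"
proof -
  have "isCont (\<lambda>r. g'' r + 3 / r^4) 1"
    using DERIV_isCont[OF DERIV_g''] by (auto intro!: continuous_intros)
  then obtain d0 where d0: "d0 > 0"
    "\<And>r. r \<noteq> 1 \<Longrightarrow> \<bar>r - 1\<bar> < d0 \<Longrightarrow> \<bar>(g'' r + 3 / r^4) - \<Gamma>\<bar> < \<bar>\<Gamma>\<bar> / 4"
    using LIM_D[of "\<lambda>r. g'' r + 3 / r^4" \<Gamma> 1 "\<bar>\<Gamma>\<bar> / 4"] Gamma_pos_abs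
    unfolding isCont_def by (auto simp: \<Gamma>_def)
  define d where "d = min (d0 / 2) (1 / 2)"
  have "dir * pot''' c r < 0" if r: "\<bar>r - 1\<bar> \<le> d" and c: "c^2 \<le> 1" "1 - c^2 < \<bar>\<Gamma>\<bar> / 64" for c r
  proof -
    define X where "X = g'' r + 3 / r^4"
    define e where "e = 1 - c^2"
    have e: "0 \<le> e" "e < \<bar>\<Gamma>\<bar> / 64" using c by (simp_all add: e_def)
    have "\<bar>X - \<Gamma>\<bar> < \<bar>\<Gamma>\<bar> / 4"
      unfolding X_def using d0 r Gamma_pos_abs by (cases "r = 1") (auto simp: d_def \<Gamma>_def)
    then have X: "X - \<Gamma> < \<bar>\<Gamma>\<bar> / 4" "\<Gamma> - X < \<bar>\<Gamma>\<bar> / 4"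
      unfolding abs_less_iff by linarith+
    have "\<bar>r - 1\<bar> \<le> 1 / 2" using r by (simp add: d_def)
    then have "1 / 2 \<le> r" using abs_le_iff[of "r - 1" "1 / 2"] by linarith
    then have "1 / 16 \<le> r^4" using power_mono[of "1/2" r 4] by (simp add: power_divide)
    then have "3 * e \<le> (48 * r^4) * e" using e by (intro mult_right_mono) auto
    then have "3 * e / r^4 \<le> 48 * e"
      using \<open>1 / 2 \<le> r\<close> by (simp add: divide_le_eq mult_ac)
    moreover have "0 \<le> 3 * e / r^4" using e by simp
    moreover have "pot''' c r = X - 3 * e / r^4"
      by (simp add: pot'''_def X_def e_def diff_divide_distrib algebra_simps)
    ultimately have "pot''' c r - \<Gamma> < \<bar>\<Gamma>\<bar>" "\<Gamma> - pot''' c r < \<bar>\<Gamma>\<bar>"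
      using X e by linarith+
    then show ?thesis by (auto simp: dir_def sgn_if abs_if split: if_splits)
  qed
  moreover have "0 < d" "d \<le> 1/2" using d0 by (auto simp: d_def)
  ultimately show ?thesis using that by blast
qed

lemma pot_sonic_neg:
  assumes d: "0 < d" "d \<le> 1/2"
    and H: "\<And>c r. \<bar>r - 1\<bar> \<le> d \<Longrightarrow> c^2 \<le> 1 \<Longrightarrow> 1 - c^2 < \<bar>\<Gamma>\<bar> / 64 \<Longrightarrow> dir * pot''' c r < 0"
  shows "pot 1 (1 + dir * d) < 0"
proof -
  have pot''': "dir * pot''' 1 (1 + dir * y) < 0" if "0 < y" "y \<le> d" for y
    using H[of "1 + dir * y" 1] that Gamma_pos_abs abs_dir by (simp add: abs_mult)
  have pot'': "pot'' 1 (1 + dir * y) < 0" if "0 < y" "y \<le> d" for y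
    by (rule neg_of_DERIV_neg_from_zero[of "\<lambda>y. pot'' 1 (1 + dir * y)" d])
      (use that pot''' pot_at_1 DERIV_pot_along_dir(3) d in auto)
  have pot': "dir * pot' 1 (1 + dir * y) < 0" if "0 < y" "y \<le> d" for y
    by (rule neg_of_DERIV_neg_from_zero[of "\<lambda>y. dir * pot' 1 (1 + dir * y)" d])
      (use that pot'' pot_at_1 DERIV_pot_along_dir(2) d in auto)
  show ?thesis
    by (rule neg_of_DERIV_neg_from_zero[of "\<lambda>y. pot 1 (1 + dir * y)" d])
      (use pot' pot_at_1 DERIV_pot_along_dir(1) d in auto)
qed

definition first_zero :: "real \<Rightarrow> real \<Rightarrow> bool" where
  "first_zero c y0 \<longleftrightarrow> 0 < y0 \<and> y0 < 1/2 \<and> pot c (1 + dir * y0) = 0 \<and> dir * pot' c (1 + dir * y0) < 0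
     \<and> (\<forall>y. 0 < y \<and> y < y0 \<longrightarrow> 0 < pot c (1 + dir * y))"

lemma first_zero_exists:
  assumes d: "0 < d" "d \<le> 1/2"
    and H: "\<And>c r. \<bar>r - 1\<bar> \<le> d \<Longrightarrow> c^2 \<le> 1 \<Longrightarrow> 1 - c^2 < \<bar>\<Gamma>\<bar> / 64 \<Longrightarrow> dir * pot''' c r < 0"
    and c: "0 < 1 - c^2" "1 - c^2 < \<bar>\<Gamma>\<bar> / 64" "1 - c^2 < - pot 1 (1 + dir * d)"
  shows "\<exists>y0. first_zero c y0"
proof -
  define r where "r = 1 + dir * d"
  have r: "1 \<le> 2 * r" "(r - 1)^2 \<le> 1/4"
    using d dir_cases power_mono[of d "1/2" 2] by (auto simp: r_def power2_eq_square)
  have "pot c r = pot 1 r + (1 - c^2) * ((r - 1)^2 / (2 * r))"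
    using r by (simp add: pot_def field_simps)
  moreover have "(1 - c^2) * ((r - 1)^2 / (2 * r)) \<le> (1 - c^2) * 1"
    using c r by (intro mult_left_mono) (auto simp: divide_le_eq)
  ultimately have pot_d: "pot c (1 + dir * d) < 0" using c(3) by (simp add: r_def)
  have pot''': "dir * pot''' c (1 + dir * y) < 0" if "0 < y" "y \<le> d" for y
    using H[of "1 + dir * y" c] that c abs_dir by (simp add: abs_mult)
  obtain y0 where "0 < y0" "y0 < d" "pot c (1 + dir * y0) = 0" "dir * pot' c (1 + dir * y0) < 0"
    "\<And>y. 0 < y \<Longrightarrow> y < y0 \<Longrightarrow> 0 < pot c (1 + dir * y)"
    by (rule first_zero_of_DERIV_third_neg[where f="\<lambda>y. pot c (1 + dir * y)"
          and f'="\<lambda>y. dir * pot' c (1 + dir * y)" and f''="\<lambda>y. pot'' c (1 + dir * y)"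
          and f'''="\<lambda>y. dir * pot''' c (1 + dir * y)", OF d(1) _ _ _ _ _ _ pot''' pot_d])
      (use d c pot_at_1 DERIV_pot_along_dir in auto)
  then show ?thesis using d unfolding first_zero_def by auto
qed

lemma first_zero_for_small_eps:
  obtains \<epsilon>0 where "0 < \<epsilon>0" "\<And>\<epsilon>. 0 < \<epsilon> \<Longrightarrow> \<epsilon> < \<epsilon>0 \<Longrightarrow> \<epsilon> < 1 \<Longrightarrow> \<exists>y0. first_zero (sqrt (1 - \<epsilon>^2)) y0"
proof -
  obtain d where d: "0 < d" "d \<le> 1/2"
    and H: "\<And>c r. \<bar>r - 1\<bar> \<le> d \<Longrightarrow> c^2 \<le> 1 \<Longrightarrow> 1 - c^2 < \<bar>\<Gamma>\<bar> / 64 \<Longrightarrow> dir * pot''' c r < 0"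
    using dir_pot'''_neg_near_sonic by blast
  define \<kappa> where "\<kappa> = min (- pot 1 (1 + dir * d)) (\<bar>\<Gamma>\<bar> / 64)"
  have \<kappa>: "0 < \<kappa>" using pot_sonic_neg[OF d H] Gamma_pos_abs by (simp add: \<kappa>_def)
  show ?thesis
  proof (rule that[of "sqrt \<kappa>"])
    show "0 < sqrt \<kappa>" using \<kappa> by simp
    fix \<epsilon> :: real assume \<epsilon>: "0 < \<epsilon>" "\<epsilon> < sqrt \<kappa>" "\<epsilon> < 1"
    then have "\<epsilon>^2 < \<kappa>" "\<epsilon>^2 < 1"
      using real_sqrt_less_iff[of "\<epsilon>^2" \<kappa>] power_strict_mono[of \<epsilon> 1 2] by auto
    then show "\<exists>y0. first_zero (sqrt (1 - \<epsilon>^2)) y0"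
      using first_zero_exists[OF d H] \<epsilon> by (simp add: \<kappa>_def)
  qed
qed

lemma rho_m_eq_first_zero:
  assumes "first_zero (sqrt (1 - \<epsilon>^2)) y0" "\<gamma> = 1 / \<Gamma>"
  shows "rho_m G \<gamma> \<epsilon> = 1 + dir * y0"
proof -
  let ?c = "sqrt (1 - \<epsilon>^2)"
  have y0: "0 < y0" "y0 < 1/2" "pot ?c (1 + dir * y0) = 0"
    and before: "\<And>y. 0 < y \<Longrightarrow> y < y0 \<Longrightarrow> 0 < pot ?c (1 + dir * y)"
    using assms(1) by (auto simp: first_zero_def)
  show ?thesis
  proof (cases "0 < \<gamma>")
    case True
    then have dir: "dir = -1" using assms(2) by (simp add: dir_def)
    have "Sup {r. 0 < r \<and> r < 1 \<and> Feps G \<epsilon> r = 0} = 1 + dir * y0"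
    proof (rule cSup_eq_maximum)
      show "1 + dir * y0 \<in> {r. 0 < r \<and> r < 1 \<and> Feps G \<epsilon> r = 0}"
        using y0 dir by (simp add: Feps_eq_pot)
      fix r assume "r \<in> {r. 0 < r \<and> r < 1 \<and> Feps G \<epsilon> r = 0}"
      then show "r \<le> 1 + dir * y0"
        using before[of "1 - r"] dir by (force simp: Feps_eq_pot)
    qed
    then show ?thesis using True by (simp add: rho_m_def)
  next
    case False
    then have dir: "dir = 1" using assms(2) Gamma_pos_abs dir_cases by (auto simp: dir_def)
    have "Inf {r. 1 < r \<and> Feps G \<epsilon> r = 0} = 1 + dir * y0"
    proof (rule cInf_eq_minimum)
      show "1 + dir * y0 \<in> {r. 1 < r \<and> Feps G \<epsilon> r = 0}"
        using y0 dir by (simp add: Feps_eq_pot)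
      fix r assume "r \<in> {r. 1 < r \<and> Feps G \<epsilon> r = 0}"
      then show "1 + dir * y0 \<le> r"
        using before[of "r - 1"] dir by (force simp: Feps_eq_pot)
    qed
    then show ?thesis using False by (simp add: rho_m_def)
  qed
qed

text \<open>The profile equation has the first integral \<open>K(\<rho>) \<rho>'\<^sup>2 = 2 pot(\<rho>)\<close>, i.e. \<open>\<rho>'\<^sup>2 = Q(\<rho>)\<close>.\<close>
definition Q :: "real \<Rightarrow> real \<Rightarrow> real" where
  "Q c r = 2 * pot c r / K r"
definition Q' :: "real \<Rightarrow> real \<Rightarrow> real" where
  "Q' c r = 2 * (pot' c r * K r - pot c r * K' r) / (K r)^2"

lemma DERIV_Q: "0 < r \<Longrightarrow> DERIV (Q c) r :> Q' c r"
  unfolding Q_def Q'_def using DERIV_pot[of r c] DERIV_K[of r] K_pos[of r]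
  by (auto intro!: derivative_eq_intros simp: field_simps power2_eq_square)

lemma Q'_differentiable:
  assumes "0 < r" shows "Q' c differentiable (at r)"
proof -
  have "pot c differentiable (at r)" "pot' c differentiable (at r)"
    "K differentiable (at r)" "K' differentiable (at r)"
    using DERIV_pot[OF assms] DERIV_pot'[OF assms] DERIV_K[OF assms] DERIV_K'[OF assms]
    unfolding real_differentiable_def by blast+
  then show ?thesis
    unfolding Q'_def[abs_def] using K_pos[OF assms] by (intro derivative_intros) auto
qed

lemma profile_equation_of_Q: "0 < r \<Longrightarrow> K r * (Q' c r / 2) + 1/2 * K' r * Q c r = pot' c r"
  using K_pos[of r] by (simp add: Q_def Q'_def field_simps power2_eq_square)

lemma profile_exists:
  assumes "first_zero c y0"
  obtains \<rho> \<rho>' \<rho>'' where "\<And>t. DERIV \<rho> t :> \<rho>' t" "\<And>t. DERIV \<rho>' t :> \<rho>'' t" "\<And>t. 1/2 \<le> \<rho> t"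
    "\<And>t. K (\<rho> t) * \<rho>'' t + 1/2 * K' (\<rho> t) * (\<rho>' t)^2 = pot' c (\<rho> t)"
    "\<rho> 0 = 1 + dir * y0" "\<rho>' 0 = 0" "\<And>t. \<rho> (-t) = \<rho> t"
    "dir = -1 \<Longrightarrow> strict_mono_on {0..} \<rho>" "dir = 1 \<Longrightarrow> strict_antimono_on {0..} \<rho>"
    "\<And>F. F \<in> {at_top, at_bot} \<Longrightarrow> (\<rho> \<longlongrightarrow> 1) F \<and> (\<rho>' \<longlongrightarrow> 0) F \<and> (\<rho>'' \<longlongrightarrow> 0) F"
proof -
  define a where "a = 1 + dir * y0"
  have y0: "0 < y0" "y0 < 1/2" and pot_a: "pot c a = 0" and pot'_a: "dir * pot' c a < 0"
    and pot_pos: "\<And>y. 0 < y \<Longrightarrow> y < y0 \<Longrightarrow> 0 < pot c (1 + dir * y)"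
    using assms by (auto simp: first_zero_def a_def)
  have ray_pos: "1/2 \<le> a - dir * z" if "0 \<le> z" "z \<le> y0" for z
    using that y0 dir_cases by (auto simp: a_def)
  have a1: "a - dir * y0 = 1" by (simp add: a_def)
  define D where "D z = Q c (a - dir * z)" for z
  define D' where "D' z = - dir * Q' c (a - dir * z)" for z
  have ray: "DERIV (\<lambda>z. a - dir * z) z :> - dir" for z by (auto intro!: derivative_eq_intros)
  interpret homoclinic_potential D D' y0
  proof
    show "DERIV D z :> D' z" if "0 \<le> z" "z \<le> y0" for z
      unfolding D_def D'_def using DERIV_chain2[OF DERIV_Q ray] ray_pos[OF that]
      by (simp add: mult.commute)
    have "Q' c differentiable (at (a - dir * y0))" using Q'_differentiable[of 1 c] a1 by simp
    then have "(\<lambda>z. Q' c (a - dir * z)) differentiable (at y0)"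
      by (rule differentiable_compose) (intro derivative_intros)
    then show "D' differentiable (at y0)" unfolding D'_def[abs_def] by simp
    have "0 < K a" using K_pos ray_pos[of 0] y0 by simp
    then have "D' 0 = - (2 * (dir * pot' c a) / K a)"
      using pot_a by (simp add: D'_def Q'_def power2_eq_square)
    then show "0 < D' 0" using pot'_a \<open>0 < K a\<close> by (simp add: divide_neg_pos)
    show "0 < D z" if "0 < z" "z < y0" for z
      using pot_pos[of "y0 - z"] that K_pos[of "a - dir * z"] ray_pos[of z]
      by (simp add: D_def Q_def a_def algebra_simps)
  qed (use y0 pot_a a1 pot_at_1 in \<open>simp_all add: D_def D'_def Q_def Q'_def\<close>)
  obtain w w' where dw: "\<And>t. DERIV w t :> w' t" and dw': "\<And>t. DERIV w' t :> D' (w t) / 2"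
    and energy: "\<And>t. (w' t)^2 = D (w t)" and w_range: "\<And>t. 0 \<le> w t \<and> w t < y0"
    and w0: "w 0 = 0" "w' 0 = 0" and w_even: "\<And>t. w (-t) = w t" and w_mono: "strict_mono_on {0..} w"
    and w_lim: "\<And>F. F \<in> {at_top, at_bot} \<Longrightarrow> (w \<longlongrightarrow> y0) F \<and> (w' \<longlongrightarrow> 0) F \<and> ((\<lambda>t. D' (w t)) \<longlongrightarrow> 0) F"
    using homoclinic_orbit by blast
  define \<rho> where "\<rho> t = a - dir * w t" for t
  define \<rho>' where "\<rho>' t = - dir * w' t" for t
  define \<rho>'' where "\<rho>'' t = - dir * (D' (w t) / 2)" for t
  have \<rho>_ge: "1/2 \<le> \<rho> t" for t
    using ray_pos[of "w t"] w_range[of t] by (simp add: \<rho>_def)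
  have \<rho>_eq: "K (\<rho> t) * \<rho>'' t + 1/2 * K' (\<rho> t) * (\<rho>' t)^2 = pot' c (\<rho> t)" for t
  proof -
    have "(\<rho>' t)^2 = Q c (\<rho> t)" "\<rho>'' t = Q' c (\<rho> t) / 2"
      using energy[of t] dir_cases
      by (auto simp: \<rho>'_def \<rho>''_def D_def D'_def \<rho>_def power_mult_distrib)
    then show ?thesis
      using profile_equation_of_Q[of "\<rho> t" c] \<rho>_ge[of t] by (simp only:)
  qed
  have \<rho>_lim: "(\<rho> \<longlongrightarrow> 1) F \<and> (\<rho>' \<longlongrightarrow> 0) F \<and> (\<rho>'' \<longlongrightarrow> 0) F" if "F \<in> {at_top, at_bot}" for F
    using w_lim[OF that] a1 unfolding \<rho>_def \<rho>'_def \<rho>''_def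
    by (auto intro!: tendsto_eq_intros)
  have \<rho>_mono: "strict_mono_on {0..} \<rho>" if "dir = -1"
    using w_mono that by (auto simp: \<rho>_def strict_mono_on_def)
  have \<rho>_antimono: "strict_antimono_on {0..} \<rho>" if "dir = 1"
    using w_mono that by (auto simp: \<rho>_def strict_mono_on_def monotone_on_def)
  have d\<rho>: "DERIV \<rho> t :> \<rho>' t" and d\<rho>': "DERIV \<rho>' t :> \<rho>'' t" for t
    unfolding \<rho>_def \<rho>'_def \<rho>''_def using dw dw' by (auto intro!: derivative_eq_intros)
  show ?thesis
    by (rule that[OF d\<rho> d\<rho>' \<rho>_ge \<rho>_eq _ _ _ \<rho>_mono \<rho>_antimono \<rho>_lim])
      (use w0 w_even in \<open>simp_all add: \<rho>_def \<rho>'_def a_def\<close>)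
qed

definition profile_rhs :: "real \<Rightarrow> real \<Rightarrow> real \<Rightarrow> real" where
  "profile_rhs c r p = pot' c r / K r - K' r / K r * p^2 / 2"

lemma local_lipschitz_halfplane_profile_rhs: "local_lipschitz_halfplane (profile_rhs c)"
  unfolding profile_rhs_def[abs_def]
proof (rule local_lipschitz_halfplane_quadratic)
  fix z :: real assume z: "0 < z"
  note derivs = DERIV_pot''[OF z] DERIV_pot'[OF z] DERIV_K[OF z] DERIV_K'[OF z] DERIV_K''[OF z]
  show "DERIV (\<lambda>r. pot' c r / K r) z :> (pot'' c z * K z - pot' c z * K' z) / (K z)^2"
    "DERIV (\<lambda>r. K' r / K r) z :> (K'' z * K z - K' z * K' z) / (K z)^2"
    using derivs K_pos[OF z]
    by (auto intro!: derivative_eq_intros simp: field_simps power2_eq_square)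
  show "isCont (\<lambda>z. (pot'' c z * K z - pot' c z * K' z) / (K z)^2) z"
    "isCont (\<lambda>z. (K'' z * K z - K' z * K' z) / (K z)^2) z"
    using derivs[THEN DERIV_isCont] K_pos[OF z] by (auto intro!: continuous_intros)
qed

lemma DERIV_of_ode_sol:
  assumes "ode_sol K g c I \<sigma>" "t \<in> I"
  shows "0 < \<sigma> t \<and> DERIV \<sigma> t :> deriv \<sigma> t \<and> DERIV (deriv \<sigma>) t :> profile_rhs c (\<sigma> t) (deriv \<sigma> t)"
proof -
  have h: "0 < \<sigma> t" "\<sigma> differentiable (at t)" "deriv \<sigma> differentiable (at t)"
    "K (\<sigma> t) * deriv (deriv \<sigma>) t + 1/2 * K' (\<sigma> t) * (deriv \<sigma> t)^2 = pot' c (\<sigma> t)"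
    using assms unfolding ode_sol_def pot'_def by auto
  have "DERIV \<sigma> t :> deriv \<sigma> t" "DERIV (deriv \<sigma>) t :> deriv (deriv \<sigma>) t"
    using h(2,3) by (simp_all add: DERIV_deriv_iff_real_differentiable)
  moreover have "deriv (deriv \<sigma>) t = profile_rhs c (\<sigma> t) (deriv \<sigma> t)"
    using h(4) K_pos[OF h(1)] unfolding profile_rhs_def by (simp add: field_simps)
  ultimately show ?thesis using h(1) by simp
qed

lemma ode_sol_unique:
  assumes "ode_sol K g c I \<sigma>" "ode_sol K g c UNIV \<rho>" "is_interval I" "0 \<in> I"
    "\<sigma> 0 = \<rho> 0" "deriv \<sigma> 0 = deriv \<rho> 0" "t \<in> I"
  shows "\<sigma> t = \<rho> t"
  using second_order_ode_unique[OF local_lipschitz_halfplane_profile_rhs,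
      where x=\<sigma> and x'="deriv \<sigma>" and y=\<rho> and y'="deriv \<rho>"]
    DERIV_of_ode_sol[OF assms(1)] DERIV_of_ode_sol[OF assms(2)] assms(3-)
  by blast

lemma ode_sol_of_profile:
  assumes "\<And>t. DERIV \<rho> t :> \<rho>' t" "\<And>t. DERIV \<rho>' t :> \<rho>'' t" "\<And>t. 0 < \<rho> t"
    "\<And>t. K (\<rho> t) * \<rho>'' t + 1/2 * K' (\<rho> t) * (\<rho>' t)^2 = pot' c (\<rho> t)"
  shows "ode_sol K g c UNIV \<rho>" "deriv \<rho> = \<rho>'" "deriv \<rho>' = \<rho>''"
proof -
  show d\<rho>: "deriv \<rho> = \<rho>'" "deriv \<rho>' = \<rho>''"
    using assms(1,2) by (auto intro!: ext DERIV_imp_deriv)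
  show "ode_sol K g c UNIV \<rho>"
    unfolding ode_sol_def d\<rho> using assms by (auto simp: real_differentiable_def pot'_def)
qed

definition euler_korteweg :: "real \<Rightarrow> (real \<Rightarrow> real) \<Rightarrow> (real \<Rightarrow> real) \<Rightarrow> bool" where
  "euler_korteweg c \<rho> u \<longleftrightarrow>
     (\<forall>t. (\<lambda>s. \<rho> s * u s) differentiable (at t) \<and>
          - c * deriv \<rho> t + deriv (\<lambda>s. \<rho> s * u s) t = 0) \<and>
     (\<forall>t. u differentiable (at t) \<and> (\<lambda>s. u s ^ 2 / 2) differentiable (at t) \<and>
          (\<lambda>s. g (\<rho> s)) differentiable (at t) \<and>
          (\<lambda>s. K (\<rho> s) * deriv (deriv \<rho>) s + 1/2 * deriv K (\<rho> s) * (deriv \<rho> s)^2)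
            differentiable (at t) \<and>
          - c * deriv u t + deriv (\<lambda>s. u s ^ 2 / 2) t + deriv (\<lambda>s. g (\<rho> s)) t
          = deriv (\<lambda>s. K (\<rho> s) * deriv (deriv \<rho>) s + 1/2 * deriv K (\<rho> s) * (deriv \<rho> s)^2) t)"

definition tends_to_sonic_state :: "(real \<Rightarrow> real) \<Rightarrow> (real \<Rightarrow> real) \<Rightarrow> bool" where
  "tends_to_sonic_state \<rho> u \<longleftrightarrow>
     (\<forall>F\<in>{at_top, at_bot}.
        (\<rho> \<longlongrightarrow> 1) F \<and> (deriv \<rho> \<longlongrightarrow> 0) F \<and> (deriv (deriv \<rho>) \<longlongrightarrow> 0) F \<and>
        (u \<longlongrightarrow> 0) F \<and> (deriv u \<longlongrightarrow> 0) F \<and> (deriv (deriv u) \<longlongrightarrow> 0) F)"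

lemma euler_korteweg_of_profile:
  assumes d\<rho>: "\<And>t. DERIV \<rho> t :> \<rho>' t" and d\<rho>': "\<And>t. DERIV \<rho>' t :> \<rho>'' t"
    and pos: "\<And>t. 0 < \<rho> t"
    and ode: "\<And>t. K (\<rho> t) * \<rho>'' t + 1/2 * K' (\<rho> t) * (\<rho>' t)^2 = pot' c (\<rho> t)"
    and lim: "\<And>F. F \<in> {at_top, at_bot} \<Longrightarrow> (\<rho> \<longlongrightarrow> 1) F \<and> (\<rho>' \<longlongrightarrow> 0) F \<and> (\<rho>'' \<longlongrightarrow> 0) F"
    and u: "u = (\<lambda>t. c * (\<rho> t - 1) / \<rho> t)"
  shows "euler_korteweg c \<rho> u" "tends_to_sonic_state \<rho> u"
proof -
  note D = ode_sol_of_profile(2,3)[OF d\<rho> d\<rho>' pos ode]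
  have nz: "\<rho> t \<noteq> 0" for t using pos[of t] by simp
  define u' where "u' t = c * \<rho>' t / (\<rho> t)^2" for t
  define u'' where "u'' t = c * (\<rho>'' t / (\<rho> t)^2 - 2 * (\<rho>' t)^2 / (\<rho> t)^3)" for t
  have du: "DERIV u t :> u' t" for t
    unfolding u u'_def using d\<rho> nz[of t]
    by (auto intro!: derivative_eq_intros simp: field_simps power2_eq_square)
  have du': "DERIV u' t :> u'' t" for t
    unfolding u'_def u''_def using d\<rho> d\<rho>' nz[of t]
    by (auto intro!: derivative_eq_intros simp: field_simps eval_nat_numeral)
  have Du: "deriv u = u'" "deriv u' = u''" using du du' by (auto intro!: ext DERIV_imp_deriv)
  have mass: "DERIV (\<lambda>s. \<rho> s * u s) t :> c * \<rho>' t" for t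
  proof -
    have "(\<lambda>s. \<rho> s * u s) = (\<lambda>s. c * (\<rho> s - 1))" using nz by (auto simp: u)
    then show ?thesis using d\<rho>[of t] by (auto intro!: derivative_eq_intros)
  qed
  have flux: "(\<lambda>s. K (\<rho> s) * \<rho>'' s + 1/2 * K' (\<rho> s) * (\<rho>' s)^2) = (\<lambda>s. pot' c (\<rho> s))"
    using ode by auto
  have momentum: "- c * u' t + u t * u' t + g' (\<rho> t) * \<rho>' t = pot'' c (\<rho> t) * \<rho>' t" for t
    using nz[of t] unfolding u u'_def pot''_def by (simp add: field_simps eval_nat_numeral)
  have d_sq: "DERIV (\<lambda>s. u s ^ 2 / 2) t :> u t * u' t" for t
    using du[of t] by (auto intro!: derivative_eq_intros)
  have d_g: "DERIV (\<lambda>s. g (\<rho> s)) t :> g' (\<rho> t) * \<rho>' t" for t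
    using DERIV_chain2[OF DERIV_g[OF pos] d\<rho>] .
  have d_flux: "DERIV (\<lambda>s. pot' c (\<rho> s)) t :> pot'' c (\<rho> t) * \<rho>' t" for t
    using DERIV_chain2[OF DERIV_pot'[OF pos] d\<rho>] .
  show "euler_korteweg c \<rho> u"
    unfolding euler_korteweg_def D flux
  proof (intro allI conjI)
    fix t
    show "(\<lambda>s. \<rho> s * u s) differentiable (at t)" "u differentiable (at t)"
      "(\<lambda>s. u s ^ 2 / 2) differentiable (at t)" "(\<lambda>s. g (\<rho> s)) differentiable (at t)"
      "(\<lambda>s. pot' c (\<rho> s)) differentiable (at t)"
      using mass[of t] du[of t] d_sq[of t] d_g[of t] d_flux[of t]
      by (auto simp: real_differentiable_def)
    show "- c * \<rho>' t + deriv (\<lambda>s. \<rho> s * u s) t = 0"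
      using DERIV_imp_deriv[OF mass[of t]] by simp
    show "- c * deriv u t + deriv (\<lambda>s. u s ^ 2 / 2) t + deriv (\<lambda>s. g (\<rho> s)) t
        = deriv (\<lambda>s. pot' c (\<rho> s)) t"
      using momentum[of t] DERIV_imp_deriv[OF du[of t]] DERIV_imp_deriv[OF d_sq[of t]]
        DERIV_imp_deriv[OF d_g[of t]] DERIV_imp_deriv[OF d_flux[of t]] by simp
  qed
  have "(u \<longlongrightarrow> 0) F \<and> (u' \<longlongrightarrow> 0) F \<and> (u'' \<longlongrightarrow> 0) F" if "F \<in> {at_top, at_bot}" for F
    using lim[OF that] unfolding u u'_def u''_def by (auto intro!: tendsto_eq_intros)
  then show "tends_to_sonic_state \<rho> u"
    unfolding tends_to_sonic_state_def D Du using lim by blast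
qed

definition unique_global_solution :: "real \<Rightarrow> real \<Rightarrow> (real \<Rightarrow> real) \<Rightarrow> bool" where
  "unique_global_solution c a \<rho> \<longleftrightarrow> ode_sol K g c UNIV \<rho> \<and> \<rho> 0 = a \<and> deriv \<rho> 0 = 0 \<and>
     (\<forall>I \<sigma>. open I \<and> is_interval I \<and> 0 \<in> I \<and> ode_sol K g c I \<sigma> \<and> \<sigma> 0 = a \<and> deriv \<sigma> 0 = 0
        \<longrightarrow> (\<forall>t\<in>I. \<sigma> t = \<rho> t))"

definition travelling_wave :: "real \<Rightarrow> real \<Rightarrow> real \<Rightarrow> (real \<Rightarrow> real) \<Rightarrow> bool" where
  "travelling_wave c \<gamma> a \<rho> \<longleftrightarrow> unique_global_solution c a \<rho> \<and>
     (\<forall>u. u = (\<lambda>t. c * (\<rho> t - 1) / \<rho> t) \<longrightarrow> euler_korteweg c \<rho> u \<and> tends_to_sonic_state \<rho> u) \<and>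
     (\<forall>t. \<rho> (- t) = \<rho> t) \<and> (\<gamma> > 0 \<longrightarrow> strict_mono_on {0..} \<rho>) \<and> (\<gamma> < 0 \<longrightarrow> strict_antimono_on {0..} \<rho>)"

lemma travelling_wave_exists:
  assumes "first_zero c y0" "\<gamma> = 1 / \<Gamma>"
  shows "\<exists>\<rho>. travelling_wave c \<gamma> (1 + dir * y0) \<rho>"
proof -
  obtain \<rho> \<rho>' \<rho>'' where d\<rho>: "\<And>t. DERIV \<rho> t :> \<rho>' t" and d\<rho>': "\<And>t. DERIV \<rho>' t :> \<rho>'' t"
    and \<rho>_ge: "\<And>t. 1/2 \<le> \<rho> t"
    and ode: "\<And>t. K (\<rho> t) * \<rho>'' t + 1/2 * K' (\<rho> t) * (\<rho>' t)^2 = pot' c (\<rho> t)"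
    and init: "\<rho> 0 = 1 + dir * y0" "\<rho>' 0 = 0" and even: "\<And>t. \<rho> (-t) = \<rho> t"
    and mono: "dir = -1 \<Longrightarrow> strict_mono_on {0..} \<rho>" "dir = 1 \<Longrightarrow> strict_antimono_on {0..} \<rho>"
    and lim: "\<And>F. F \<in> {at_top, at_bot} \<Longrightarrow> (\<rho> \<longlongrightarrow> 1) F \<and> (\<rho>' \<longlongrightarrow> 0) F \<and> (\<rho>'' \<longlongrightarrow> 0) F"
    by (rule profile_exists[OF assms(1)]) (rule that)
  have pos: "0 < \<rho> t" for t using \<rho>_ge[of t] by linarith
  note sol = ode_sol_of_profile[OF d\<rho> d\<rho>' pos ode]
  have "unique_global_solution c (1 + dir * y0) \<rho>"
    unfolding unique_global_solution_def
  proof (intro conjI allI impI ballI)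
    show "ode_sol K g c UNIV \<rho>" "\<rho> 0 = 1 + dir * y0" "deriv \<rho> 0 = 0"
      using sol init by simp_all
    fix I \<sigma> t
    assume "open I \<and> is_interval I \<and> 0 \<in> I \<and> ode_sol K g c I \<sigma> \<and> \<sigma> 0 = 1 + dir * y0 \<and> deriv \<sigma> 0 = 0"
      and "t \<in> I"
    then show "\<sigma> t = \<rho> t"
      using ode_sol_unique[OF _ sol(1), of I \<sigma> t] init sol(2) by simp
  qed
  moreover have "0 < \<gamma> \<longleftrightarrow> dir = -1" "\<gamma> < 0 \<longleftrightarrow> dir = 1"
    using assms(2) Gamma_pos_abs by (auto simp: dir_def sgn_if)
  ultimately show ?thesis
    using euler_korteweg_of_profile[OF d\<rho> d\<rho>' pos ode lim] even mono
    unfolding travelling_wave_def by blast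
qed

lemma travelling_wave_for_small_eps:
  obtains \<epsilon>0 where "0 < \<epsilon>0" "\<And>\<epsilon> \<gamma>. 0 < \<epsilon> \<Longrightarrow> \<epsilon> < \<epsilon>0 \<Longrightarrow> \<epsilon> < 1 \<Longrightarrow> \<gamma> = 1 / \<Gamma> \<Longrightarrow>
    \<exists>\<rho>. travelling_wave (sqrt (1 - \<epsilon>^2)) \<gamma> (rho_m G \<gamma> \<epsilon>) \<rho>"
proof -
  obtain \<epsilon>0 where "0 < \<epsilon>0"
    and "\<And>\<epsilon>. 0 < \<epsilon> \<Longrightarrow> \<epsilon> < \<epsilon>0 \<Longrightarrow> \<epsilon> < 1 \<Longrightarrow> \<exists>y0. first_zero (sqrt (1 - \<epsilon>^2)) y0"
    by (rule first_zero_for_small_eps) (rule that)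
  with that show ?thesis
    using travelling_wave_exists rho_m_eq_first_zero by metis
qed

end

lemma DERIV_iterated_deriv_of_smooth_on:
  assumes "smooth_on S f" "x \<in> S"
  shows "DERIV ((deriv ^^ n) f) x :> (deriv ^^ Suc n) f x"
  using assms by (simp add: smooth_on_def DERIV_deriv_iff_real_differentiable)

lemma korteweg_profile_of_smooth:
  assumes K: "smooth_on {0<..} K" and g: "smooth_on {0<..} g" and "\<forall>x>0. K x > 0"
    and "g 1 = 0" "deriv g 1 = 1" "deriv (deriv g) 1 + 3 \<noteq> 0"
    and "\<forall>x>0. (G has_real_derivative g x) (at x)" "G 1 = 0"
  shows "korteweg_profile K g G"
proof
  fix x :: real assume "0 < x"
  then have "DERIV ((deriv ^^ n) f) x :> (deriv ^^ Suc n) f x" if "f = g \<or> f = K" for f n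
    using that DERIV_iterated_deriv_of_smooth_on[OF g] DERIV_iterated_deriv_of_smooth_on[OF K] by auto
  from this[of _ 0] this[of _ 1] this[of _ 2]
  show "DERIV g x :> deriv g x" "DERIV (deriv g) x :> deriv (deriv g) x"
    "DERIV (deriv (deriv g)) x :> deriv (deriv (deriv g)) x"
    "DERIV K x :> deriv K x" "DERIV (deriv K) x :> deriv (deriv K) x"
    "DERIV (deriv (deriv K)) x :> deriv (deriv (deriv K)) x"
    by (simp_all add: numeral_2_eq_2)
qed (use assms in auto)

theorem propositionA3:
  fixes K g G :: "real \<Rightarrow> real"
  assumes K_smooth: "smooth_on {0<..} K"
    and g_smooth: "smooth_on {0<..} g"
    and K_pos: "\<forall>x>0. K x > 0"
    and g1: "g 1 = 0"
    and dg1: "deriv g 1 = 1"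
    and Gamma_nz: "deriv (deriv g) 1 + 3 \<noteq> 0"
    and G_prim: "\<forall>x>0. (G has_real_derivative g x) (at x)"
    and G1: "G 1 = 0"
  shows "\<exists>\<epsilon>0>0. \<forall>\<epsilon> c \<gamma>. 0 < \<epsilon> \<and> \<epsilon> < \<epsilon>0 \<and> \<epsilon> < 1 \<and> c = sqrt (1 - \<epsilon>^2)
           \<and> \<gamma> = 1 / (deriv (deriv g) 1 + 3) \<longrightarrow>
      (\<exists>\<rho>::real \<Rightarrow> real.
         ode_sol K g c UNIV \<rho> \<and> \<rho> 0 = rho_m G \<gamma> \<epsilon> \<and> deriv \<rho> 0 = 0 \<and>
         \<comment> \<open>uniqueness: it is THE solution of the Cauchy problem (its maximal solution is global)\<close>
         (\<forall>I \<sigma>. open I \<and> is_interval I \<and> 0 \<in> I \<and> ode_sol K g c I \<sigma> \<and>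
                 \<sigma> 0 = rho_m G \<gamma> \<epsilon> \<and> deriv \<sigma> 0 = 0 \<longrightarrow> (\<forall>t\<in>I. \<sigma> t = \<rho> t)) \<and>
         (\<forall>u. u = (\<lambda>t. c * (\<rho> t - 1) / \<rho> t) \<longrightarrow>
            \<comment> \<open>first equation: -c rho' + (rho u)' = 0\<close>
            (\<forall>t. (\<lambda>s. \<rho> s * u s) differentiable (at t) \<and>
                 - c * deriv \<rho> t + deriv (\<lambda>s. \<rho> s * u s) t = 0) \<and>
            \<comment> \<open>second equation: -c u' + (u^2/2)' + g(rho)' = (K(rho) rho'' + 1/2 K'(rho) rho'^2)'\<close>
            (\<forall>t. u differentiable (at t) \<and> (\<lambda>s. u s ^ 2 / 2) differentiable (at t) \<and>
                 (\<lambda>s. g (\<rho> s)) differentiable (at t) \<and>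
                 (\<lambda>s. K (\<rho> s) * deriv (deriv \<rho>) s + 1/2 * deriv K (\<rho> s) * (deriv \<rho> s)^2)
                    differentiable (at t) \<and>
                 - c * deriv u t + deriv (\<lambda>s. u s ^ 2 / 2) t + deriv (\<lambda>s. g (\<rho> s)) t
                 = deriv (\<lambda>s. K (\<rho> s) * deriv (deriv \<rho>) s + 1/2 * deriv K (\<rho> s) * (deriv \<rho> s)^2) t) \<and>
            \<comment> \<open>behaviour at plus and minus infinity\<close>
            (\<forall>F\<in>{at_top, at_bot}.
                (\<rho> \<longlongrightarrow> 1) F \<and> (deriv \<rho> \<longlongrightarrow> 0) F \<and> (deriv (deriv \<rho>) \<longlongrightarrow> 0) F \<and>
                (u \<longlongrightarrow> 0) F \<and> (deriv u \<longlongrightarrow> 0) F \<and> (deriv (deriv u) \<longlongrightarrow> 0) F)) \<and>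
         (\<forall>t. \<rho> (- t) = \<rho> t) \<and>
         (\<gamma> > 0 \<longrightarrow> strict_mono_on {0..} \<rho>) \<and>
         (\<gamma> < 0 \<longrightarrow> strict_antimono_on {0..} \<rho>))"
proof -
  interpret korteweg_profile K g G
    by (rule korteweg_profile_of_smooth[OF assms])
  obtain \<epsilon>0 where "0 < \<epsilon>0" and "\<And>\<epsilon> \<gamma>. 0 < \<epsilon> \<Longrightarrow> \<epsilon> < \<epsilon>0 \<Longrightarrow> \<epsilon> < 1 \<Longrightarrow> \<gamma> = 1 / \<Gamma> \<Longrightarrow>
      \<exists>\<rho>. travelling_wave (sqrt (1 - \<epsilon>^2)) \<gamma> (rho_m G \<gamma> \<epsilon>) \<rho>"
    by (rule travelling_wave_for_small_eps) (rule that)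
  then show ?thesis
    unfolding travelling_wave_def unique_global_solution_def euler_korteweg_def
      tends_to_sonic_state_def \<Gamma>_def conj_assoc
    by blast
qed

end
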